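(* Let $\Omega$ be a set with exactly two elements, let $M=(\pi(\omega'\mid\omega))_{\omega,\omega'\in\Omega}$ be the transition matrix of an irreducible Markov chain on $\Omega$, let $r:\Omega\to\mathbb{R}$ and let $\delta\in[0,1)$. Then, in the advisor's decision problem described in the context, the greedy strategy $\sigma_*$ is optimal for every initial distribution $p_1\in\Delta(\Omega)$, i.e. its payoff from $p_1$ equals $V_\delta(p_1)$.
   Context: Identify each $\omega\in\Omega$ with a unit vector of $\mathbb{R}^\Omega$ and $\Delta(\Omega)$ (probability distributions on $\Omega$, the "beliefs") with the unit simplex. For $p\in\Delta(\Omega)$ let $\langle p,r\rangle=\sum_\omega p(\omega)r(\omega)$. The investment region is $I=\{p\in\Delta(\Omega):\langle p,r\rangle\ge 0\}$ and $J=\Delta(\Omega)\setminus I$. Let $\phi(q)=qM$ (row vector times matrix). For $p\in\Delta(\Omega)$, $\mathcal{S}(p)$ is the set of Borel probability measures on $\Delta(\Omega)$ with mean $p$ ("splittings at $p$"), and $\mu_p$ is the Dirac mass at $p$. The decision problem from $p_1$: at each stage $n\ge1$, at the current belief $p_n$, the advisor chooses $\mu\in\mathcal{S}(p_n)$ (possibly depending on the past), a posterior $q_n$ is drawn according to $\mu$, the stage payoff is $1$ if $q_n\in I$ and $0$ otherwise, and $p_{n+1}=\phi(q_n)$. A strategy is such a rule for choosing splittings; its payoff is $\mathbb{E}[(1-\delta)\sum_{n\ge1}\delta^{n-1}\mathbf{1}_{\{q_n\in I\}}]$, and $V_\delta(p_1)$ is the supremum (in fact maximum) of the payoff over strategies;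 a strategy is optimal at $p_1$ if it achieves $V_\delta(p_1)$. The greedy strategy $\sigma_*$ is stationary in the belief: at $p\in I$ it chooses $\mu_p$ (no information); at $p\in J$ it chooses a two-point splitting $p=a_Iq_I+a_Jq_J$ (posterior $q_I$ with probability $a_I$, $q_J$ with probability $a_J$) solving: maximize $a_I$ subject to $p=a_Iq_I+a_Jq_J$, $q_I\in I$, $q_J\in\Delta(\Omega)$, $a_I+a_J=1$, $a_I,a_J\ge0$. *)

theory Defs
  imports "HOL-Analysis.Analysis" "HOL-Probability.Probability"
begin

text \<open>States: a finite type 'w. Beliefs: vectors in real^'w lying in the unit beliefs.
  Transition matrix M with M$w$w' = pi(w' | w); phi(q) = q M (row vector times matrix).\<close>

definition beliefs :: "(real^'w::finite) set" where
  "beliefs = {p. (\<forall>w. 0 \<le> p$w) \<and> (\<Sum>w\<in>UNIV. p$w) = 1}"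

definition stochastic :: "real^'w::finite^'w \<Rightarrow> bool" where
  "stochastic M \<longleftrightarrow> (\<forall>i j. 0 \<le> M$i$j) \<and> (\<forall>i. (\<Sum>j\<in>UNIV. M$i$j) = 1)"

definition irreducible :: "real^'w::finite^'w \<Rightarrow> bool" where
  "irreducible M \<longleftrightarrow> (\<forall>i j. (i, j) \<in> {(a, b). 0 < M$a$b}\<^sup>*)"

definition phi :: "real^'w::finite^'w \<Rightarrow> real^'w \<Rightarrow> real^'w" where
  "phi M q = q v* M"

definition invest :: "real^'w::finite \<Rightarrow> (real^'w) set" where
  "invest r = {p \<in> beliefs. 0 \<le> p \<bullet> r}"

definition noinvest :: "real^'w::finite \<Rightarrow> (real^'w) set" where
  "noinvest r = beliefs - invest r"

definition splittings :: "(real^'w::finite) \<Rightarrow> (real^'w) measure set" where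
  "splittings p = {\<mu>. prob_space \<mu> \<and> sets \<mu> = sets borel \<and> emeasure \<mu> beliefs = 1
        \<and> integrable \<mu> (\<lambda>q. q) \<and> integral\<^sup>L \<mu> (\<lambda>q. q) = p}"

text \<open>Histories of past posteriors q_1..q_n (indices 0..n-1) as extensional functions.\<close>
abbreviation hist_space :: "nat \<Rightarrow> (nat \<Rightarrow> real^'w::finite) measure" where
  "hist_space n \<equiv> PiM {..<n} (\<lambda>_. borel)"

text \<open>Current belief at stage n+1 (index n) given history h.\<close>
definition belief :: "real^'w::finite^'w \<Rightarrow> real^'w \<Rightarrow> nat \<Rightarrow> (nat \<Rightarrow> real^'w) \<Rightarrow> real^'w" where
  "belief M p1 n h = (if n = 0 then p1 else phi M (h (n - 1)))"

definition is_strategy :: "real^'w::finite^'w \<Rightarrow> real^'w \<Rightarrow> (nat \<Rightarrow> (nat \<Rightarrow> real^'w) \<Rightarrow> (real^'w) measure) \<Rightarrow> bool" where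
  "is_strategy M p1 \<sigma> \<longleftrightarrow>
     (\<forall>n. \<sigma> n \<in> measurable (hist_space n) (subprob_algebra borel)) \<and>
     (\<forall>n h. h \<in> space (hist_space n) \<and> (\<forall>i<n. h i \<in> beliefs)
            \<longrightarrow> \<sigma> n h \<in> splittings (belief M p1 n h))"

text \<open>Expected discounted payoff of stages n+1, ..., n+N given history h of length n.\<close>
fun Wfin :: "real^'w::finite \<Rightarrow> real \<Rightarrow> (nat \<Rightarrow> (nat \<Rightarrow> real^'w) \<Rightarrow> (real^'w) measure)
              \<Rightarrow> nat \<Rightarrow> nat \<Rightarrow> (nat \<Rightarrow> real^'w) \<Rightarrow> ennreal" where
  "Wfin r \<delta> \<sigma> 0 n h = 0"
| "Wfin r \<delta> \<sigma> (Suc N) n h =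
     (\<integral>\<^sup>+ q. (ennreal ((1 - \<delta>) * \<delta> ^ n) * indicator (invest r) q
               + Wfin r \<delta> \<sigma> N (Suc n) (h(n := q))) \<partial>(\<sigma> n h))"

text \<open>Payoff E[(1-delta) sum_n delta^(n-1) 1{q_n in I}] (limit of finite horizons, monotone convergence).\<close>
definition payoff :: "real^'w::finite \<Rightarrow> real \<Rightarrow> (nat \<Rightarrow> (nat \<Rightarrow> real^'w) \<Rightarrow> (real^'w) measure) \<Rightarrow> ennreal" where
  "payoff r \<delta> \<sigma> = (SUP N. Wfin r \<delta> \<sigma> N 0 (\<lambda>_. undefined))"

definition value_fn :: "real^'w::finite^'w \<Rightarrow> real^'w \<Rightarrow> real \<Rightarrow> real^'w \<Rightarrow> ennreal" where
  "value_fn M r \<delta> p1 = (SUP \<sigma> \<in> {\<sigma>. is_strategy M p1 \<sigma>}. payoff r \<delta> \<sigma>)"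

definition two_point :: "real \<Rightarrow> real^'w::finite \<Rightarrow> real^'w \<Rightarrow> (real^'w) measure" where
  "two_point a qI qJ = distr (measure_pmf (bernoulli_pmf a)) borel (\<lambda>b. if b then qI else qJ)"

definition feasible_split :: "real^'w::finite \<Rightarrow> real^'w \<Rightarrow> real \<Rightarrow> real^'w \<Rightarrow> real^'w \<Rightarrow> bool" where
  "feasible_split r p a qI qJ \<longleftrightarrow> 0 \<le> a \<and> a \<le> 1 \<and> qI \<in> invest r \<and> qJ \<in> beliefs
      \<and> p = a *\<^sub>R qI + (1 - a) *\<^sub>R qJ"

definition greedy_splittings :: "real^'w::finite \<Rightarrow> real^'w \<Rightarrow> (real^'w) measure set" where
  "greedy_splittings r p = {two_point a qI qJ | a qI qJ. feasible_split r p a qI qJ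
      \<and> (\<forall>a' qI' qJ'. feasible_split r p a' qI' qJ' \<longrightarrow> a' \<le> a)}"

definition greedy_choice :: "real^'w::finite \<Rightarrow> (real^'w \<Rightarrow> (real^'w) measure) \<Rightarrow> bool" where
  "greedy_choice r G \<longleftrightarrow> (\<forall>p \<in> invest r. G p = return borel p)
      \<and> (\<forall>p \<in> noinvest r. G p \<in> greedy_splittings r p)"

text \<open>The stationary strategy induced by G (off the beliefs: irrelevant default).\<close>
definition greedy_strategy :: "real^'w::finite^'w \<Rightarrow> (real^'w \<Rightarrow> (real^'w) measure) \<Rightarrow> real^'w
      \<Rightarrow> nat \<Rightarrow> (nat \<Rightarrow> real^'w) \<Rightarrow> (real^'w) measure" where
  "greedy_strategy M G p1 n h =
     (let p = belief M p1 n h in if p \<in> beliefs then G p else return borel p)"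

end

theory Submission
  imports Defs
begin

text \<open>With two states a belief is its mass \<open>x \<in> [0, 1]\<close> on one state, the dynamics is affine,
  \<open>x \<mapsto> \<beta> + \<gamma> * x\<close>, and investing is optimal exactly on an interval \<open>[c, 1]\<close>. Let \<open>V\<close> be the
  payoff of the greedy strategy. Its finite-horizon approximations are minima of affine and
  concave functions, so \<open>V\<close> is (up to arbitrarily small errors) concave and, by Jensen, no
  splitting of \<open>x\<close> raises the expectation of \<open>V\<close> above \<open>V x\<close>. Moreover \<open>V\<close> satisfies the Bellman
  inequality: for \<open>x < c\<close>, revealing nothing today yields \<open>\<delta> * V (\<beta> + \<gamma> * x) \<le> V x\<close>, which is
  checked by a case analysis on how the dynamics moves \<open>[0, c]\<close>. By induction on the horizon,
  \<open>V\<close> then bounds the payoff of every strategy, and the greedy strategy attains it.\<close>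

lemma affine_nonpos_between:
  fixes u v p q x :: real
  assumes "p \<le> x" "x \<le> q" "u + v * p \<le> 0" "u + v * q \<le> 0"
  shows "u + v * x \<le> 0"
proof (cases "0 \<le> v")
  case True
  then have "v * x \<le> v * q" using assms by (intro mult_left_mono) auto
  then show ?thesis using assms by linarith
next
  case False
  then have "v * x \<le> v * p" using assms by (intro mult_left_mono_neg) auto
  then show ?thesis using assms by linarith
qed

lemma exists_mult_power_less:
  fixes d s e :: real
  assumes "0 \<le> d" "d < 1" "0 < e"
  shows "\<exists>k. s * d ^ k < e"
proof -
  have "(\<lambda>k. s * d ^ k) \<longlonglongrightarrow> s * 0" using assms by (intro tendsto_intros LIMSEQ_power_zero) auto
  then have "\<forall>\<^sub>F k in sequentially. s * d ^ k < e" using assms by (intro order_tendstoD) auto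
  then show ?thesis by (meson eventually_sequentially order_refl)
qed

lemma ennreal_convex_combination:
  assumes "0 \<le> t" "t \<le> 1" "0 \<le> u" "0 \<le> v"
  shows "ennreal t * ennreal u + ennreal (1 - t) * ennreal v = ennreal (t * u + (1 - t) * v)"
  using assms by (simp add: ennreal_mult[symmetric] ennreal_plus[symmetric] del: ennreal_plus)

section \<open>Supporting lines on the unit interval\<close>

definition upper_supported :: "(real \<Rightarrow> real) \<Rightarrow> bool" where
  "upper_supported f \<longleftrightarrow> (\<forall>x\<in>{0..1}. \<exists>m. \<forall>y\<in>{0..1}. f y \<le> f x + m * (y - x))"

lemma upper_supportedD:
  assumes "upper_supported f" "x \<in> {0..1}"
  obtains m where "\<And>y. y \<in> {0..1} \<Longrightarrow> f y \<le> f x + m * (y - x)"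
  using assms unfolding upper_supported_def by blast

lemma upper_supported_cong:
  assumes "\<And>y. y \<in> {0..1} \<Longrightarrow> f y = g y" and "upper_supported f"
  shows "upper_supported g"
  using assms unfolding upper_supported_def by metis

lemma upper_supported_affine: "upper_supported (\<lambda>y. a + b * y)"
  unfolding upper_supported_def by (auto intro!: exI[of _ b] simp: algebra_simps)

lemma upper_supported_add_const:
  "upper_supported f \<Longrightarrow> upper_supported (\<lambda>y. a + f y)"
  unfolding upper_supported_def by (metis add_le_cancel_left add.assoc)

lemma upper_supported_min:
  assumes f: "upper_supported f" and g: "upper_supported g"
  shows "upper_supported (\<lambda>y. min (f y) (g y))"
  unfolding upper_supported_def
proof
  fix x :: real assume x: "x \<in> {0..1}"
  show "\<exists>m. \<forall>y\<in>{0..1}. min (f y) (g y) \<le> min (f x) (g x) + m * (y - x)"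
  proof (cases "f x \<le> g x")
    case True
    obtain m where "\<And>y. y \<in> {0..1} \<Longrightarrow> f y \<le> f x + m * (y - x)" using upper_supportedD[OF f x] by blast
    then show ?thesis using True by (intro exI[of _ m]) fastforce
  next
    case False
    obtain m where "\<And>y. y \<in> {0..1} \<Longrightarrow> g y \<le> g x + m * (y - x)" using upper_supportedD[OF g x] by blast
    then show ?thesis using False by (intro exI[of _ m]) fastforce
  qed
qed

lemma upper_supported_scale_comp_affine:
  assumes f: "upper_supported f" and d: "0 \<le> d"
    and maps: "\<And>y. y \<in> {0..1} \<Longrightarrow> b + l * y \<in> {0..1}"
  shows "upper_supported (\<lambda>y. d * f (b + l * y))"
  unfolding upper_supported_def
proof
  fix x :: real assume x: "x \<in> {0..1}"
  obtain m where m: "\<And>z. z \<in> {0..1} \<Longrightarrow> f z \<le> f (b + l * x) + m * (z - (b + l * x))"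
    using upper_supportedD[OF f maps[OF x]] by blast
  have "d * f (b + l * y) \<le> d * f (b + l * x) + (d * m * l) * (y - x)" if "y \<in> {0..1}" for y
    using mult_left_mono[OF m[OF maps[OF that]] d] by (simp add: algebra_simps)
  then show "\<exists>m. \<forall>y\<in>{0..1}. d * f (b + l * y) \<le> d * f (b + l * x) + m * (y - x)" by blast
qed

section \<open>The greedy payoff on the unit interval\<close>

text \<open>Below \<open>c\<close> the greedy
  advisor splits \<open>x\<close> into the posteriors \<open>c\<close> (with probability \<open>x / c\<close>) and \<open>0\<close>; \<open>greedy_op\<close> is the
  resulting one-step payoff operator.\<close>

definition greedy_op :: "real \<Rightarrow> real \<Rightarrow> real \<Rightarrow> real \<Rightarrow> (real \<Rightarrow> real) \<Rightarrow> real \<Rightarrow> real" where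
  "greedy_op \<beta> \<gamma> c \<delta> F x = (if c \<le> x then (1 - \<delta>) + \<delta> * F (\<beta> + \<gamma> * x)
     else (1 - x / c) * (\<delta> * F \<beta>) + (x / c) * ((1 - \<delta>) + \<delta> * F (\<beta> + \<gamma> * c)))"

fun greedy_iter :: "real \<Rightarrow> real \<Rightarrow> real \<Rightarrow> real \<Rightarrow> nat \<Rightarrow> real \<Rightarrow> real" where
  "greedy_iter \<beta> \<gamma> c \<delta> 0 = (\<lambda>x. 0)"
| "greedy_iter \<beta> \<gamma> c \<delta> (Suc n) = greedy_op \<beta> \<gamma> c \<delta> (greedy_iter \<beta> \<gamma> c \<delta> n)"

definition greedy_value :: "real \<Rightarrow> real \<Rightarrow> real \<Rightarrow> real \<Rightarrow> real \<Rightarrow> real" where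
  "greedy_value \<beta> \<gamma> c \<delta> x = lim (\<lambda>n. greedy_iter \<beta> \<gamma> c \<delta> n x)"

locale greedy_interval =
  fixes \<beta> \<gamma> c \<delta> :: real
  assumes \<beta>_nonneg: "0 \<le> \<beta>" and \<beta>_le_1: "\<beta> \<le> 1"
    and \<beta>\<gamma>_nonneg: "0 \<le> \<beta> + \<gamma>" and \<beta>\<gamma>_le_1: "\<beta> + \<gamma> \<le> 1"
    and c_le_1: "c \<le> 1" and \<delta>_nonneg: "0 \<le> \<delta>" and \<delta>_less_1: "\<delta> < 1"
begin

abbreviation shift :: "real \<Rightarrow> real" where "shift x \<equiv> \<beta> + \<gamma> * x"
abbreviation T :: "(real \<Rightarrow> real) \<Rightarrow> real \<Rightarrow> real" where "T \<equiv> greedy_op \<beta> \<gamma> c \<delta>"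
abbreviation W :: "nat \<Rightarrow> real \<Rightarrow> real" where "W \<equiv> greedy_iter \<beta> \<gamma> c \<delta>"
abbreviation V :: "real \<Rightarrow> real" where "V \<equiv> greedy_value \<beta> \<gamma> c \<delta>"

lemma shift_unit: "0 \<le> x \<Longrightarrow> x \<le> 1 \<Longrightarrow> 0 \<le> shift x \<and> shift x \<le> 1"
proof -
  assume x: "0 \<le> x" "x \<le> 1"
  have e: "shift x = (1 - x) * \<beta> + x * (\<beta> + \<gamma>)" by (simp add: algebra_simps)
  have "0 \<le> (1 - x) * \<beta> + x * (\<beta> + \<gamma>)" using x \<beta>_nonneg \<beta>\<gamma>_nonneg by simp
  moreover have "(1 - x) * \<beta> + x * (\<beta> + \<gamma>) \<le> (1 - x) * 1 + x * 1"
    using x \<beta>_le_1 \<beta>\<gamma>_le_1 by (intro add_mono mult_left_mono) auto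
  ultimately show ?thesis using e by simp
qed

lemma \<gamma>_abs_le_1: "\<bar>\<gamma>\<bar> \<le> 1"
  using \<beta>_nonneg \<beta>_le_1 \<beta>\<gamma>_nonneg \<beta>\<gamma>_le_1 by linarith

lemma \<delta>\<gamma>_sq_le_1: "\<delta> * \<delta> * (\<gamma> * \<gamma>) \<le> 1"
proof -
  have "\<gamma> * \<gamma> \<le> 1" using \<gamma>_abs_le_1 by (metis abs_le_square_iff abs_one power2_eq_square power_one)
  moreover have "\<delta> * \<delta> \<le> 1" using \<delta>_nonneg \<delta>_less_1 by (simp add: mult_le_one)
  ultimately show ?thesis using \<delta>_nonneg by (simp add: mult_le_one)
qed

lemma \<delta>\<gamma>_le_1: "\<delta> * \<gamma> \<le> 1"
proof (cases "0 \<le> \<gamma>")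
  case True
  then have "\<delta> * \<gamma> \<le> \<gamma>" using \<delta>_nonneg \<delta>_less_1 by (simp add: mult_left_le_one_le)
  then show ?thesis using \<gamma>_abs_le_1 by simp
next
  case False
  then show ?thesis using \<delta>_nonneg mult_nonneg_nonpos[of \<delta> \<gamma>] by simp
qed

lemma greedy_op_mono:
  assumes FH: "\<And>y. 0 \<le> y \<Longrightarrow> y \<le> 1 \<Longrightarrow> F y \<le> H y + e" and e: "0 \<le> e"
    and x: "0 \<le> x" "x \<le> 1"
  shows "T F x \<le> T H x + \<delta> * e"
proof (cases "c \<le> x")
  case True
  have "F (shift x) \<le> H (shift x) + e" using FH shift_unit x by blast
  then have "\<delta> * F (shift x) \<le> \<delta> * (H (shift x) + e)" using \<delta>_nonneg by (rule mult_left_mono)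
  then show ?thesis using True by (simp add: greedy_op_def algebra_simps)
next
  case False
  then have cpos: "0 < c" using x by linarith
  have t0: "0 \<le> x / c" and t1: "x / c \<le> 1" using False x cpos by auto
  have "F \<beta> \<le> H \<beta> + e" using FH[of \<beta>] \<beta>_nonneg \<beta>_le_1 by simp
  then have h1: "\<delta> * F \<beta> \<le> \<delta> * (H \<beta> + e)" using \<delta>_nonneg by (rule mult_left_mono)
  have "F (shift c) \<le> H (shift c) + e" using FH shift_unit[of c] cpos c_le_1 by auto
  then have h2: "\<delta> * F (shift c) \<le> \<delta> * (H (shift c) + e)" using \<delta>_nonneg by (rule mult_left_mono)
  have "(1 - x / c) * (\<delta> * F \<beta>) + (x / c) * ((1 - \<delta>) + \<delta> * F (shift c))
     \<le> (1 - x / c) * (\<delta> * (H \<beta> + e)) + (x / c) * ((1 - \<delta>) + \<delta> * (H (shift c) + e))"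
  proof (rule add_mono)
    show "(1 - x / c) * (\<delta> * F \<beta>) \<le> (1 - x / c) * (\<delta> * (H \<beta> + e))"
      by (rule mult_left_mono[OF h1]) (use t1 in simp)
    show "(x / c) * ((1 - \<delta>) + \<delta> * F (shift c)) \<le> (x / c) * ((1 - \<delta>) + \<delta> * (H (shift c) + e))"
      using h2 t0 by (intro mult_left_mono) simp_all
  qed
  also have "\<dots> = (1 - x / c) * (\<delta> * H \<beta>) + (x / c) * ((1 - \<delta>) + \<delta> * H (shift c)) + \<delta> * e"
    by (simp add: algebra_simps)
  finally show ?thesis using False by (simp add: greedy_op_def)
qed

lemma greedy_iter_bounds: "0 \<le> x \<Longrightarrow> x \<le> 1 \<Longrightarrow> 0 \<le> W n x \<and> W n x \<le> 1 - \<delta> ^ n"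
proof (induction n arbitrary: x)
  case 0 then show ?case by simp
next
  case (Suc n)
  have IH: "0 \<le> W n y" "W n y \<le> 1 - \<delta> ^ n" if "0 \<le> y" "y \<le> 1" for y
    using Suc.IH that by auto
  have step: "0 \<le> (1 - \<delta>) * e + \<delta> * W n y" "(1 - \<delta>) * e + \<delta> * W n y \<le> 1 - \<delta> ^ Suc n"
    if "0 \<le> y" "y \<le> 1" "0 \<le> e" "e \<le> 1" for y e
  proof -
    have "\<delta> * W n y \<le> \<delta> * (1 - \<delta> ^ n)" using IH[OF that(1,2)] \<delta>_nonneg by (intro mult_left_mono)
    moreover have "(1 - \<delta>) * e \<le> 1 - \<delta>" using that \<delta>_less_1 by (simp add: mult_left_le)
    ultimately show "(1 - \<delta>) * e + \<delta> * W n y \<le> 1 - \<delta> ^ Suc n" by (simp add: algebra_simps)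
    show "0 \<le> (1 - \<delta>) * e + \<delta> * W n y" using IH[OF that(1,2)] that \<delta>_nonneg \<delta>_less_1 by simp
  qed
  show ?case
  proof (cases "c \<le> x")
    case True
    then show ?thesis using step[of "shift x" 1] shift_unit Suc.prems by (simp add: greedy_op_def)
  next
    case False
    then have cpos: "0 < c" using Suc.prems by linarith
    have t: "0 \<le> x / c" "x / c \<le> 1" using False Suc.prems cpos by auto
    define u where "u = (1 - \<delta>) * 0 + \<delta> * W n \<beta>"
    define v where "v = (1 - \<delta>) * 1 + \<delta> * W n (shift c)"
    have u: "0 \<le> u" "u \<le> 1 - \<delta> ^ Suc n" unfolding u_def using step[of \<beta> 0] \<beta>_nonneg \<beta>_le_1 by auto
    have v: "0 \<le> v" "v \<le> 1 - \<delta> ^ Suc n"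
      unfolding v_def using step[of "shift c" 1] shift_unit[of c] cpos c_le_1 by auto
    have "W (Suc n) x = (1 - x / c) * u + (x / c) * v" using False by (simp add: u_def v_def greedy_op_def)
    moreover have "0 \<le> (1 - x / c) * u + (x / c) * v" using u v t by (intro add_nonneg_nonneg mult_nonneg_nonneg) auto
    moreover have "(1 - x / c) * u + (x / c) * v \<le> (1 - x / c) * (1 - \<delta> ^ Suc n) + (x / c) * (1 - \<delta> ^ Suc n)"
      using u v t by (intro add_mono mult_left_mono) auto
    ultimately show ?thesis by (simp add: algebra_simps)
  qed
qed

lemma greedy_iter_le_Suc: "0 \<le> x \<Longrightarrow> x \<le> 1 \<Longrightarrow> W n x \<le> W (Suc n) x"
proof (induction n arbitrary: x)
  case 0 then show ?case using greedy_iter_bounds[of x 1] by simp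
next
  case (Suc n)
  have "T (W n) x \<le> T (W (Suc n)) x + \<delta> * 0" by (rule greedy_op_mono) (use Suc in auto)
  then show ?case by simp
qed

lemma greedy_iter_add_le: "0 \<le> x \<Longrightarrow> x \<le> 1 \<Longrightarrow> W (n + k) x \<le> W n x + \<delta> ^ n"
proof (induction n arbitrary: x)
  case 0 then show ?case using greedy_iter_bounds[of x k] zero_le_power[OF \<delta>_nonneg, of k] by simp
next
  case (Suc n)
  have "T (W (n + k)) x \<le> T (W n) x + \<delta> * \<delta> ^ n" by (rule greedy_op_mono) (use Suc \<delta>_nonneg in auto)
  then show ?case by simp
qed

lemma greedy_iter_tendsto:
  assumes "0 \<le> x" "x \<le> 1"
  shows "(\<lambda>n. W n x) \<longlonglongrightarrow> V x"
proof -
  have "Bseq (\<lambda>n. W n x)"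
  proof (rule BseqI'[of _ 1])
    fix n
    show "norm (W n x) \<le> 1"
      using greedy_iter_bounds[OF assms, of n] zero_le_power[OF \<delta>_nonneg, of n] by auto
  qed
  moreover have "incseq (\<lambda>n. W n x)" by (rule incseq_SucI) (rule greedy_iter_le_Suc[OF assms])
  ultimately have "convergent (\<lambda>n. W n x)" by (metis Bseq_mono_convergent incseq_def)
  then show ?thesis unfolding greedy_value_def by (simp add: convergent_LIMSEQ_iff)
qed

lemma greedy_iter_le_value: "0 \<le> x \<Longrightarrow> x \<le> 1 \<Longrightarrow> W n x \<le> V x"
  by (rule incseq_le[OF incseq_SucI greedy_iter_tendsto]) (rule greedy_iter_le_Suc)

lemma greedy_value_le_iter:
  assumes "0 \<le> x" "x \<le> 1"
  shows "V x \<le> W n x + \<delta> ^ n"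
proof (rule LIMSEQ_le_const2[OF greedy_iter_tendsto[OF assms]])
  show "\<exists>N. \<forall>m\<ge>N. W m x \<le> W n x + \<delta> ^ n"
    using greedy_iter_add_le[OF assms, of n] by (metis le_add_diff_inverse)
qed

lemma greedy_value_bounds: "0 \<le> x \<Longrightarrow> x \<le> 1 \<Longrightarrow> 0 \<le> V x \<and> V x \<le> 1"
  using greedy_iter_le_value[of x 0] greedy_value_le_iter[of x 0] by simp

lemma greedy_value_fixpoint:
  assumes x: "0 \<le> x" "x \<le> 1"
  shows "V x = T V x"
proof -
  have "(\<lambda>n. W (Suc n) x) \<longlonglongrightarrow> V x"
    using greedy_iter_tendsto[OF x] by (rule LIMSEQ_Suc)
  moreover have "(\<lambda>n. W (Suc n) x) \<longlonglongrightarrow> T V x"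
  proof (cases "c \<le> x")
    case True
    have "0 \<le> shift x" "shift x \<le> 1" using shift_unit x by auto
    then show ?thesis using True by (simp add: greedy_op_def) (intro tendsto_intros greedy_iter_tendsto)
  next
    case False
    then have cpos: "0 < c" using x by linarith
    have "0 \<le> shift c" "shift c \<le> 1" using shift_unit[of c] cpos c_le_1 by auto
    moreover have "c \<noteq> 0" using cpos by simp
    ultimately show ?thesis using False
      by (simp add: greedy_op_def) (intro tendsto_intros greedy_iter_tendsto \<beta>_nonneg \<beta>_le_1)
  qed
  ultimately show ?thesis by (rule LIMSEQ_unique)
qed

lemma greedy_value_eq_1:
  assumes S: "\<And>y. y \<in> S \<Longrightarrow> c \<le> y \<and> 0 \<le> y \<and> y \<le> 1 \<and> shift y \<in> S" and y: "y \<in> S"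
  shows "V y = 1"
proof -
  have "W n y = 1 - \<delta> ^ n" if "y \<in> S" for n y
    using that
  proof (induction n arbitrary: y)
    case (Suc n)
    have "c \<le> y" and IH: "W n (shift y) = 1 - \<delta> ^ n" using S[OF Suc.prems] Suc.IH by auto
    then have "W (Suc n) y = (1 - \<delta>) + \<delta> * (1 - \<delta> ^ n)" by (simp add: greedy_op_def)
    then show ?case by (simp add: algebra_simps)
  qed simp
  then have "(\<lambda>n. W n y) = (\<lambda>n. 1 - \<delta> ^ n)" using y by auto
  moreover have "(\<lambda>n. 1 - \<delta> ^ n) \<longlonglongrightarrow> 1 - 0"
    using \<delta>_nonneg \<delta>_less_1 by (intro tendsto_intros LIMSEQ_power_zero) auto
  ultimately show ?thesis using greedy_iter_tendsto S[OF y] LIMSEQ_unique by fastforce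
qed

lemma greedy_op_eq_min:
  assumes F: "upper_supported F" and c: "0 < c" and y: "y \<in> {0..1}"
  shows "T F y = min (\<delta> * F \<beta> + ((1 - \<delta>) + \<delta> * F (shift c) - \<delta> * F \<beta>) / c * y) ((1 - \<delta>) + \<delta> * F (shift y))"
proof -
  text \<open>\<open>T F\<close> is the chord \<open>l\<close> below \<open>c\<close>; a supporting line of the concave \<open>h\<close> shows that \<open>l\<close>
    lies below \<open>(1 - \<delta>) + h\<close> there and above it beyond \<open>c\<close>.\<close>
  define h where "h y = \<delta> * F (shift y)" for y
  have h: "upper_supported h"
    unfolding h_def using F \<delta>_nonneg shift_unit by (intro upper_supported_scale_comp_affine) auto
  define s where "s = ((1 - \<delta>) + h c - h 0) / c"
  define l where "l y = h 0 + s * y" for y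
  have cc: "c \<in> {0..1}" using c c_le_1 by auto
  have "T F y = min (l y) ((1 - \<delta>) + h y)"
  proof (cases "c \<le> y")
    case False
    obtain m where m: "\<And>z. z \<in> {0..1} \<Longrightarrow> h z \<le> h y + m * (z - y)" using upper_supportedD[OF h y] by blast
    define t where "t = y / c"
    have t: "0 \<le> t" "t \<le> 1" "t * c = y" using False c y by (auto simp: t_def)
    have i1: "(1 - t) * h 0 \<le> (1 - t) * (h y + m * (0 - y))" using m[of 0] t by (intro mult_left_mono) auto
    have i2: "t * h c \<le> t * (h y + m * (c - y))" using m[of c] t cc by (intro mult_left_mono) auto
    have "l y = (1 - t) * h 0 + t * ((1 - \<delta>) + h c)" using c by (simp add: l_def s_def t_def field_simps)
    also have "\<dots> \<le> h y + t * (1 - \<delta>) + m * (t * c - y)" using i1 i2 by (simp add: algebra_simps)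
    also have "\<dots> \<le> h y + (1 - \<delta>)" using t \<delta>_less_1 by (simp add: mult_left_le_one_le)
    finally show ?thesis using False c by (simp add: greedy_op_def h_def l_def s_def field_simps)
  next
    case True
    obtain m where m: "\<And>z. z \<in> {0..1} \<Longrightarrow> h z \<le> h c + m * (z - c)" using upper_supportedD[OF h cc] by blast
    have "h 0 \<le> h c - m * c" using m[of 0] by (simp add: algebra_simps)
    moreover have "s * c = (1 - \<delta>) + h c - h 0" using c by (simp add: s_def)
    ultimately have "m * c \<le> s * c" using \<delta>_less_1 by linarith
    then have "m * (y - c) \<le> s * (y - c)" using c True by (intro mult_right_mono) auto
    moreover have "l y - (1 - \<delta>) = h c + s * (y - c)" using c by (simp add: l_def s_def field_simps)
    ultimately have "h y \<le> l y - (1 - \<delta>)" using m[OF y] by linarith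
    then show ?thesis using True by (simp add: greedy_op_def h_def)
  qed
  then show ?thesis by (simp add: l_def s_def h_def)
qed

lemma greedy_op_upper_supported:
  assumes F: "upper_supported F"
  shows "upper_supported (T F)"
proof -
  have high: "upper_supported (\<lambda>y. (1 - \<delta>) + \<delta> * F (shift y))"
    using F \<delta>_nonneg shift_unit by (intro upper_supported_add_const upper_supported_scale_comp_affine) auto
  show ?thesis
  proof (cases "0 < c")
    case False
    show ?thesis by (rule upper_supported_cong[OF _ high]) (use False in \<open>auto simp: greedy_op_def\<close>)
  next
    case True
    have "upper_supported (\<lambda>y. min (\<delta> * F \<beta> + ((1 - \<delta>) + \<delta> * F (shift c) - \<delta> * F \<beta>) / c * y)
        ((1 - \<delta>) + \<delta> * F (shift y)))"
      by (intro upper_supported_min upper_supported_affine high)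
    then show ?thesis by (rule upper_supported_cong[rotated]) (simp add: greedy_op_eq_min[OF F True])
  qed
qed

lemma greedy_iter_upper_supported: "upper_supported (W n)"
proof (induction n)
  case 0
  show ?case using upper_supported_affine[of 0 0] by simp
next
  case (Suc n)
  then show ?case using greedy_op_upper_supported by simp
qed

text \<open>\<open>V\<close> is concave, but at the end points of \<open>[0, 1]\<close> it need not have a supporting line; uniformly
  close approximations by the iterates do.\<close>

lemma greedy_value_approx_support:
  assumes x: "0 \<le> x" "x \<le> 1"
  obtains m where "\<And>y. 0 \<le> y \<Longrightarrow> y \<le> 1 \<Longrightarrow> V y \<le> V x + m * (y - x) + \<delta> ^ n"
proof -
  obtain m where m: "\<And>y. y \<in> {0..1} \<Longrightarrow> W n y \<le> W n x + m * (y - x)"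
    using upper_supportedD[OF greedy_iter_upper_supported] x by auto
  have "V y \<le> V x + m * (y - x) + \<delta> ^ n" if "0 \<le> y" "y \<le> 1" for y
    using greedy_value_le_iter[OF that, of n] m[of y] that greedy_iter_le_value[OF x, of n] by simp
  then show ?thesis using that by blast
qed

lemma SUP_greedy_iter:
  assumes x: "0 \<le> x" "x \<le> 1"
  shows "(SUP N. ennreal (W N x)) = ennreal (V x)"
proof (rule antisym)
  show "(SUP N. ennreal (W N x)) \<le> ennreal (V x)"
    using greedy_iter_le_value[OF x] by (intro SUP_least ennreal_leI)
  show "ennreal (V x) \<le> (SUP N. ennreal (W N x))"
  proof (rule ennreal_le_epsilon)
    fix e :: real assume "0 < e"
    then obtain k where k: "1 * \<delta> ^ k < e" using exists_mult_power_less \<delta>_nonneg \<delta>_less_1 by blast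
    have "ennreal (V x) \<le> ennreal (W k x + \<delta> ^ k)" using greedy_value_le_iter[OF x] by (rule ennreal_leI)
    also have "\<dots> = ennreal (W k x) + ennreal (\<delta> ^ k)"
      using greedy_iter_bounds[OF x] \<delta>_nonneg by (intro ennreal_plus) auto
    also have "\<dots> \<le> (SUP N. ennreal (W N x)) + ennreal e"
      using k by (intro add_mono SUP_upper ennreal_leI) auto
    finally show "ennreal (V x) \<le> (SUP N. ennreal (W N x)) + ennreal e" .
  qed
qed

end

section \<open>The descent inequality\<close>

text \<open>The descent inequality \<open>\<delta> * V (shift x) \<le> V x\<close> for \<open>x < c\<close> is the heart of the proof: it says
  that withholding information at \<open>x\<close> and postponing never beats the greedy payoff. On \<open>[0, c]\<close> the
  function \<open>V\<close> is affine, so on every piece of \<open>[0, c]\<close> where \<open>shift\<close> (and \<open>shift \<circ> shift\<close>) stays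
  in one regime the gap \<open>\<delta> * V (shift x) - V x\<close> is affine and needs checking only at the end points.\<close>

locale greedy_interval_pos = greedy_interval +
  assumes c_pos: "0 < c"
begin

definition slope :: real where "slope = (V c - V 0) / c"

lemma value_high: "c \<le> y \<Longrightarrow> y \<le> 1 \<Longrightarrow> V y = (1 - \<delta>) + \<delta> * V (shift y)"
  using greedy_value_fixpoint[of y] c_pos by (simp add: greedy_op_def)

lemma value_zero: "V 0 = \<delta> * V \<beta>"
  using greedy_value_fixpoint[of 0] c_pos by (simp add: greedy_op_def)

lemma value_low:
  assumes "0 \<le> y" "y \<le> c"
  shows "V y = V 0 + slope * y"
proof (cases "y = c")
  case True
  then show ?thesis using c_pos by (simp add: slope_def)
next
  case False
  have "V y = (1 - y / c) * (\<delta> * V \<beta>) + (y / c) * ((1 - \<delta>) + \<delta> * V (shift c))"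
    using greedy_value_fixpoint[of y] False assms c_le_1 by (simp add: greedy_op_def)
  also have "\<dots> = (1 - y / c) * V 0 + (y / c) * V c" using value_high[of c] value_zero c_le_1 by simp
  also have "\<dots> = V 0 + slope * y" using c_pos by (simp add: slope_def field_simps)
  finally show ?thesis .
qed

lemma descent_zero: "\<delta> * V (shift 0) \<le> V 0"
  using value_zero by simp

lemma descent_c: "\<delta> * V (shift c) \<le> V c"
  using value_high[of c] c_le_1 \<delta>_less_1 by simp

lemma descent_if_ge_\<delta>:
  assumes "0 \<le> x" "x \<le> 1" "\<delta> \<le> V x"
  shows "\<delta> * V (shift x) \<le> V x"
proof -
  have "V (shift x) \<le> 1" using greedy_value_bounds shift_unit assms by blast
  then have "\<delta> * V (shift x) \<le> \<delta>" using \<delta>_nonneg by (simp add: mult_left_le)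
  then show ?thesis using assms by simp
qed

lemma slope_nonneg_if_value_c_eq_1:
  assumes "V c = 1"
  shows "0 \<le> slope"
proof -
  have "0 \<le> slope * c" using assms value_low[of c] greedy_value_bounds[of 0] c_pos by simp
  then show ?thesis using c_pos by (simp add: zero_le_mult_iff)
qed

lemma descent_between:
  assumes gap: "\<And>y. p \<le> y \<Longrightarrow> y \<le> q \<Longrightarrow> \<delta> * V (shift y) - V y = u + v * y"
    and p: "\<delta> * V (shift p) \<le> V p" and q: "\<delta> * V (shift q) \<le> V q" and x: "p \<le> x" "x \<le> q"
  shows "\<delta> * V (shift x) \<le> V x"
proof -
  have "u + v * p \<le> 0" "u + v * q \<le> 0" using gap[of p] gap[of q] p q x by auto
  then have "u + v * x \<le> 0" by (rule affine_nonpos_between[OF x])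
  then show ?thesis using gap[OF x] by simp
qed

lemma gap_low:
  assumes "0 \<le> y" "y \<le> c" "0 \<le> shift y" "shift y \<le> c"
  shows "\<delta> * V (shift y) - V y = (\<delta> * (V 0 + slope * \<beta>) - V 0) + (\<delta> * slope * \<gamma> - slope) * y"
  using value_low[OF assms(3,4)] value_low[OF assms(1,2)] by (simp add: algebra_simps)

lemma gap_twice:
  assumes "0 \<le> y" "y \<le> c" "c \<le> shift y" "shift y \<le> 1" "0 \<le> shift (shift y)" "shift (shift y) \<le> c"
  shows "\<delta> * V (shift y) - V y
    = (\<delta> * ((1 - \<delta>) + \<delta> * (V 0 + slope * shift \<beta>)) - V 0) + (\<delta> * \<delta> * slope * (\<gamma> * \<gamma>) - slope) * y"
proof -
  have Vs: "V (shift y) = (1 - \<delta>) + \<delta> * (V 0 + slope * shift (shift y))"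
    unfolding value_high[OF assms(3,4)] value_low[OF assms(5,6)] ..
  show ?thesis unfolding Vs value_low[OF assms(1,2)] by (simp add: algebra_simps)
qed

lemma descent_above:
  assumes "0 \<le> slope" "0 \<le> z" "z \<le> x" "x \<le> c" "\<delta> \<le> V z"
  shows "\<delta> * V (shift x) \<le> V x"
proof (rule descent_if_ge_\<delta>)
  have "V z \<le> V x"
    using value_low[of z] value_low[of x] mult_left_mono[of z x slope] assms by simp
  then show "\<delta> \<le> V x" using assms by simp
qed (use assms c_le_1 in auto)

lemma descent_stay_low:
  assumes "\<beta> \<le> c" "shift c < c" and x: "0 \<le> x" "x \<le> c"
  shows "\<delta> * V (shift x) \<le> V x"
proof -
  have "\<delta> * V (shift y) - V y = (\<delta> * (V 0 + slope * \<beta>) - V 0) + (\<delta> * slope * \<gamma> - slope) * y"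
    if y: "0 \<le> y" "y \<le> c" for y
  proof (rule gap_low[OF y])
    show "0 \<le> shift y" using shift_unit y c_le_1 by auto
    show "shift y \<le> c"
    proof (cases "0 \<le> \<gamma>")
      case True
      then show ?thesis using mult_left_mono[OF y(2) True] assms(2) by simp
    next
      case False
      then show ?thesis using mult_nonpos_nonneg[of \<gamma> y] y assms(1) by simp
    qed
  qed
  then show ?thesis using descent_zero descent_c x by (rule descent_between)
qed

lemma descent_at_crossing_flip_low:
  assumes "c < \<beta>" "shift c < c" "\<gamma> < 0" and z: "0 \<le> z" "z \<le> c" "shift z = c"
  shows "\<delta> * V (shift z) \<le> V z"
proof -
  define p where "p = shift \<beta>"
  define v where "v = shift c"
  have v: "0 \<le> v" "v < c" using shift_unit[of c] c_pos c_le_1 assms(2) by (auto simp: v_def)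
  have p: "0 \<le> p" "p < c"
    using shift_unit[of \<beta>] \<beta>_nonneg \<beta>_le_1 mult_left_mono_neg[of c \<beta> \<gamma>] assms v
    by (auto simp: p_def v_def)
  have E1: "V 0 = \<delta> * ((1 - \<delta>) + \<delta> * (V 0 + slope * p))"
    using value_zero value_high[of \<beta>] value_low[of p] p assms(1) \<beta>_le_1 by (simp add: p_def)
  have E2: "V 0 + slope * c = (1 - \<delta>) + \<delta> * (V 0 + slope * v)"
    using value_low[of c] value_high[of c] value_low[of v] v c_pos c_le_1 by (simp add: v_def)
  text \<open>Eliminating \<open>V 0\<close> from these two equations gives \<open>slope = (1 - \<delta>) / D\<close> with \<open>D > 0\<close>.\<close>
  define D where "D = (1 + \<delta>) * (c - \<delta> * v) + \<delta> * \<delta> * p"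
  have "(1 + \<delta>) * ((V 0 + slope * c) - ((1 - \<delta>) + \<delta> * (V 0 + slope * v)))
      - (V 0 - \<delta> * ((1 - \<delta>) + \<delta> * (V 0 + slope * p))) = slope * D - (1 - \<delta>)"
    by (simp add: D_def algebra_simps)
  then have KD: "slope * D = 1 - \<delta>" using E1 E2 by simp
  have "\<delta> * v \<le> v" using v \<delta>_nonneg \<delta>_less_1 by (simp add: mult_left_le_one_le)
  then have "0 < D" unfolding D_def using v p \<delta>_nonneg by (intro add_pos_nonneg mult_pos_pos) auto
  then have "slope = (1 - \<delta>) / D" using KD by (simp add: field_simps)
  then have slope: "0 \<le> slope" using \<open>0 < D\<close> \<delta>_less_1 by simp
  have "c - \<beta> = \<gamma> * z" using z(3) by simp
  moreover have "v - p = \<gamma> * (c - \<beta>)" by (simp add: v_def p_def algebra_simps)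
  ultimately have vp: "v - p = \<gamma> * \<gamma> * z" by simp
  have "V z - \<delta> * V c = (V 0 + slope * z) - \<delta> * (V 0 + slope * c)"
    using value_low[of z] value_low[of c] z c_pos by simp
  also have "\<dots> = ((1 - \<delta>) - slope * (c - \<delta> * v)) + slope * z - \<delta> * slope * c"
    using E2 by (simp add: algebra_simps)
  also have "\<dots> = slope * (z - \<delta> * \<delta> * (\<gamma> * \<gamma>) * z)"
    using KD vp by (simp add: D_def algebra_simps)
  also have "\<dots> \<ge> 0"
    using slope z \<delta>\<gamma>_sq_le_1 mult_right_mono[of "\<delta> * \<delta> * (\<gamma> * \<gamma>)" 1 z] by simp
  finally show ?thesis using z(3) by simp
qed

lemma descent_flip_low:
  assumes "c < \<beta>" "shift c < c" and x: "0 \<le> x" "x \<le> c"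
  shows "\<delta> * V (shift x) \<le> V x"
proof -
  have \<gamma>: "\<gamma> < 0"
  proof (rule ccontr)
    assume "\<not> \<gamma> < 0"
    then have "0 \<le> \<gamma> * c" using c_pos by simp
    then show False using assms by simp
  qed
  define z where "z = (c - \<beta>) / \<gamma>"
  have z: "shift z = c" using \<gamma> by (simp add: z_def)
  have "\<gamma> * c < \<gamma> * z" using z assms(2) by simp
  then have "z \<le> c" using \<gamma> by (simp add: mult_less_cancel_left_neg)
  moreover have "0 \<le> z" using \<gamma> assms(1) by (simp add: z_def divide_nonpos_neg)
  ultimately have z_bounds: "0 \<le> z" "z \<le> c" by auto
  have key: "\<delta> * V (shift z) \<le> V z" by (rule descent_at_crossing_flip_low) (use assms \<gamma> z z_bounds in auto)
  show ?thesis
  proof (cases "z \<le> x")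
    case True
    have "\<delta> * V (shift y) - V y = (\<delta> * (V 0 + slope * \<beta>) - V 0) + (\<delta> * slope * \<gamma> - slope) * y"
      if y: "z \<le> y" "y \<le> c" for y
    proof (rule gap_low)
      have "\<gamma> * y \<le> \<gamma> * z" using y \<gamma> by (intro mult_left_mono_neg) auto
      then show "shift y \<le> c" using z by simp
    qed (use y z_bounds shift_unit c_le_1 in auto)
    then show ?thesis using key descent_c True x(2) by (rule descent_between)
  next
    case False
    then have xz: "x \<le> z" by simp
    have "\<delta> * V (shift y) - V y
        = (\<delta> * ((1 - \<delta>) + \<delta> * (V 0 + slope * shift \<beta>)) - V 0) + (\<delta> * \<delta> * slope * (\<gamma> * \<gamma>) - slope) * y"
      if y: "0 \<le> y" "y \<le> z" for y
    proof (rule gap_twice)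
      have "\<gamma> * z \<le> \<gamma> * y" using y \<gamma> by (intro mult_left_mono_neg) auto
      then show c_le: "c \<le> shift y" using z by simp
      then have "\<gamma> * shift y \<le> \<gamma> * c" using \<gamma> by (intro mult_left_mono_neg) auto
      then show "shift (shift y) \<le> c" using assms(2) by simp
      show "0 \<le> shift (shift y)" "shift y \<le> 1"
        using shift_unit[of y] shift_unit[of "shift y"] y z_bounds c_le_1 by auto
    qed (use y z_bounds in auto)
    then show ?thesis using descent_zero key x(1) xz by (rule descent_between)
  qed
qed

lemma value_ge_\<delta>_at_crossing_low:
  assumes "\<beta> < c" "V c = 1" and z: "0 \<le> z" "z \<le> c" "shift z = c"
  shows "\<delta> \<le> V z"
proof -
  have slope: "0 \<le> slope" using slope_nonneg_if_value_c_eq_1 assms(2) .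
  have E1: "V 0 = \<delta> * (V 0 + slope * \<beta>)" using value_zero value_low[of \<beta>] assms(1) \<beta>_nonneg by simp
  have ac: "V 0 + slope * c = 1" using value_low[of c] assms(2) c_pos by simp
  have "(1 - \<delta>) * (V 0 + slope * c) = slope * (c * (1 - \<delta>) + \<delta> * \<beta>)" using E1 by (simp add: algebra_simps)
  then have KD: "slope * (c * (1 - \<delta>) + \<delta> * \<beta>) = 1 - \<delta>" using ac by simp
  have "V z - \<delta> = (1 - \<delta>) - slope * (c - z)" using value_low[of z] ac z by (simp add: algebra_simps)
  also have "\<dots> = slope * (z - \<delta> * (c - \<beta>))" using KD by (simp add: algebra_simps)
  also have "\<dots> = slope * (z - \<delta> * \<gamma> * z)"
  proof -
    have "c - \<beta> = \<gamma> * z" using z(3) by simp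
    then show ?thesis by simp
  qed
  also have "\<dots> \<ge> 0"
    using slope z \<delta>\<gamma>_le_1 mult_right_mono[of "\<delta> * \<gamma>" 1 z] by simp
  finally show ?thesis by simp
qed

lemma value_ge_\<delta>_at_crossing_twice:
  assumes "c \<le> \<beta>" "V c = 1" "shift \<beta> < c" and z: "0 \<le> z" "z \<le> c" "shift (shift z) = c"
  shows "\<delta> \<le> V z"
proof -
  define p where "p = shift \<beta>"
  have p: "0 \<le> p" "p < c" using shift_unit[of \<beta>] \<beta>_nonneg \<beta>_le_1 assms(3) by (auto simp: p_def)
  have slope: "0 \<le> slope" using slope_nonneg_if_value_c_eq_1 assms(2) .
  have E1: "V 0 = \<delta> * ((1 - \<delta>) + \<delta> * (V 0 + slope * p))"
    using value_zero value_high[of \<beta>] value_low[of p] p assms(1) \<beta>_le_1 by (simp add: p_def)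
  have ac: "V 0 + slope * c = 1" using value_low[of c] assms(2) c_pos by simp
  then have V0: "V 0 = 1 - slope * c" by simp
  have "1 - slope * c = \<delta> * ((1 - \<delta>) + \<delta> * (1 - slope * c + slope * p))"
    using E1 unfolding V0 .
  moreover have "(1 - slope * c) - \<delta> * ((1 - \<delta>) + \<delta> * (1 - slope * c + slope * p))
      = (1 - \<delta>) - slope * (c - \<delta> * \<delta> * (c - p))" by (simp add: algebra_simps)
  ultimately have KD: "slope * (c - \<delta> * \<delta> * (c - p)) = 1 - \<delta>" by simp
  have "c - p = \<gamma> * (shift z - \<beta>)" using z(3) by (simp add: p_def algebra_simps)
  then have cp: "c - p = \<gamma> * \<gamma> * z" by (simp add: algebra_simps)
  have "V z - \<delta> = (1 - \<delta>) - slope * (c - z)" using value_low[of z] ac z by (simp add: algebra_simps)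
  also have "\<dots> = slope * (z - \<delta> * \<delta> * (c - p))" using KD by (simp add: algebra_simps)
  also have "\<dots> = slope * (z - \<delta> * \<delta> * (\<gamma> * \<gamma>) * z)" using cp by (simp add: algebra_simps)
  also have "\<dots> \<ge> 0"
    using slope z \<delta>\<gamma>_sq_le_1 mult_right_mono[of "\<delta> * \<delta> * (\<gamma> * \<gamma>)" 1 z] by simp
  finally show ?thesis by simp
qed

lemma shift_shift_c_ge: "c \<le> shift c \<Longrightarrow> c \<le> shift (shift c)"
proof -
  assume "c \<le> shift c"
  then have "c * (1 - \<gamma>) \<le> \<beta>" "0 \<le> 1 + \<gamma>" using \<gamma>_abs_le_1 by (auto simp: algebra_simps)
  then have "c * (1 - \<gamma>) * (1 + \<gamma>) \<le> \<beta> * (1 + \<gamma>)" by (rule mult_right_mono)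
  then show ?thesis by (simp add: algebra_simps)
qed

lemma value_eq_1_if_high:
  assumes high: "c \<le> shift c" and y: "c \<le> y" "y \<le> 1" "c \<le> shift y"
  shows "V y = 1"
proof (rule greedy_value_eq_1[of "{y. c \<le> y \<and> y \<le> 1 \<and> c \<le> shift y}"])
  fix z assume "z \<in> {y. c \<le> y \<and> y \<le> 1 \<and> c \<le> shift y}"
  then have z: "c \<le> z" "z \<le> 1" "c \<le> shift z" by auto
  have "c \<le> shift (shift z)"
  proof (cases "0 \<le> \<gamma>")
    case True
    then show ?thesis using mult_left_mono[OF z(3) True] high by simp
  next
    case False
    then have "\<gamma> * z \<le> \<gamma> * c" using mult_left_mono_neg[OF z(1)] by simp
    then have "\<gamma> * shift c \<le> \<gamma> * shift z" using False mult_left_mono_neg[of "shift z" "shift c" \<gamma>] by simp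
    then show ?thesis using shift_shift_c_ge[OF high] by simp
  qed
  then show "c \<le> z \<and> 0 \<le> z \<and> z \<le> 1 \<and> shift z \<in> {y. c \<le> y \<and> y \<le> 1 \<and> c \<le> shift y}"
    using z shift_unit[of z] c_pos by auto
qed (use y in auto)

lemma descent_from_crossing:
  assumes slope: "0 \<le> slope" and z: "0 \<le> z" "z \<le> c" "\<delta> \<le> V z"
    and gap: "\<And>y. 0 \<le> y \<Longrightarrow> y \<le> z \<Longrightarrow> \<delta> * V (shift y) - V y = u + v * y"
    and x: "0 \<le> x" "x \<le> c"
  shows "\<delta> * V (shift x) \<le> V x"
proof (cases "z \<le> x")
  case True
  then show ?thesis using descent_above slope z x by blast
next
  case False
  have "\<delta> * V (shift z) \<le> V z" by (rule descent_if_ge_\<delta>) (use z c_le_1 in auto)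
  with gap descent_zero show ?thesis by (rule descent_between) (use False x in auto)
qed

lemma descent_high_increasing:
  assumes high: "c \<le> shift c" and "0 \<le> \<gamma>" and x: "0 \<le> x" "x \<le> c"
  shows "\<delta> * V (shift x) \<le> V x"
proof -
  have "V c = 1" using value_eq_1_if_high[OF high] high c_le_1 by simp
  then have slope: "0 \<le> slope" by (rule slope_nonneg_if_value_c_eq_1)
  show ?thesis
  proof (cases "c \<le> \<beta>")
    case True
    have "c \<le> shift \<beta>" using True assms(2) \<beta>_nonneg by (simp add: add_increasing2)
    then have "V 0 = \<delta>" using value_zero value_eq_1_if_high[OF high True \<beta>_le_1] by simp
    then show ?thesis using descent_above[of 0 x] slope x by simp
  next
    case False
    then have \<gamma>: "0 < \<gamma>" using high assms(2) by (cases "\<gamma> = 0") simp_all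
    define z where "z = (c - \<beta>) / \<gamma>"
    have z: "shift z = c" "0 \<le> z" using \<gamma> False by (auto simp: z_def)
    then have "\<gamma> * z \<le> \<gamma> * c" using high by simp
    then have "z \<le> c" using \<gamma> by simp
    show ?thesis
    proof (rule descent_from_crossing[OF slope z(2) \<open>z \<le> c\<close> _ _ x])
      show "\<delta> \<le> V z"
        using value_ge_\<delta>_at_crossing_low \<open>V c = 1\<close> False z \<open>z \<le> c\<close> by simp
      fix y assume y: "0 \<le> y" "y \<le> z"
      show "\<delta> * V (shift y) - V y = (\<delta> * (V 0 + slope * \<beta>) - V 0) + (\<delta> * slope * \<gamma> - slope) * y"
      proof (rule gap_low)
        have "\<gamma> * y \<le> \<gamma> * z" using y(2) \<gamma> by (intro mult_left_mono) auto
        then show "shift y \<le> c" using z by simp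
      qed (use y z \<open>z \<le> c\<close> shift_unit c_le_1 in auto)
    qed
  qed
qed

lemma descent_high_decreasing:
  assumes high: "c \<le> shift c" and \<gamma>: "\<gamma> < 0" and x: "0 \<le> x" "x \<le> c"
  shows "\<delta> * V (shift x) \<le> V x"
proof -
  have "V c = 1" using value_eq_1_if_high[OF high] high c_le_1 by simp
  then have slope: "0 \<le> slope" by (rule slope_nonneg_if_value_c_eq_1)
  have "\<gamma> * c \<le> 0" using \<gamma> c_pos by (simp add: mult_neg_pos less_imp_le)
  then have c_le_\<beta>: "c \<le> \<beta>" using high by simp
  show ?thesis
  proof (cases "c \<le> shift \<beta>")
    case True
    then have "V 0 = \<delta>" using value_zero value_eq_1_if_high[OF high c_le_\<beta> \<beta>_le_1] by simp
    then show ?thesis using descent_above[of 0 x] slope x by simp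
  next
    case False
    have twice: "shift (shift y) = shift \<beta> + \<gamma> * \<gamma> * y" for y by (simp add: algebra_simps)
    have \<gamma>\<gamma>: "0 < \<gamma> * \<gamma>" using \<gamma> by (simp add: mult_neg_neg)
    define z where "z = (c - shift \<beta>) / (\<gamma> * \<gamma>)"
    have z: "shift (shift z) = c" "0 \<le> z" using False \<gamma>\<gamma> unfolding twice by (auto simp: z_def)
    have "\<gamma> * \<gamma> * z \<le> \<gamma> * \<gamma> * c" using z(1) shift_shift_c_ge[OF high] unfolding twice by simp
    then have "z \<le> c" using \<gamma>\<gamma> by (metis mult_le_cancel_left_pos)
    have "\<gamma> * shift z \<le> \<gamma> * c" using z(1) high by simp
    then have shift_z: "c \<le> shift z" using \<gamma> by (simp add: mult_le_cancel_left_neg)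
    show ?thesis
    proof (rule descent_from_crossing[OF slope z(2) \<open>z \<le> c\<close> _ _ x])
      show "\<delta> \<le> V z"
        using value_ge_\<delta>_at_crossing_twice c_le_\<beta> \<open>V c = 1\<close> False z \<open>z \<le> c\<close> by simp
      fix y assume y: "0 \<le> y" "y \<le> z"
      show "\<delta> * V (shift y) - V y
          = (\<delta> * ((1 - \<delta>) + \<delta> * (V 0 + slope * shift \<beta>)) - V 0) + (\<delta> * \<delta> * slope * (\<gamma> * \<gamma>) - slope) * y"
      proof (rule gap_twice)
        have "\<gamma> * z \<le> \<gamma> * y" using y(2) \<gamma> by (intro mult_left_mono_neg) auto
        then show "c \<le> shift y" using shift_z by simp
        show "shift (shift y) \<le> c"
          using z(1) mult_left_mono[OF y(2), of "\<gamma> * \<gamma>"] \<gamma>\<gamma> unfolding twice by simp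
        show "0 \<le> shift (shift y)" "shift y \<le> 1"
          using shift_unit[of y] shift_unit[of "shift y"] y z \<open>z \<le> c\<close> c_le_1 by auto
      qed (use y z \<open>z \<le> c\<close> in auto)
    qed
  qed
qed

lemma greedy_value_descent:
  assumes "0 \<le> x" "x \<le> c"
  shows "\<delta> * V (shift x) \<le> V x"
proof (cases "shift c < c")
  case True
  then show ?thesis using descent_stay_low descent_flip_low assms by (cases "\<beta> \<le> c") auto
next
  case False
  then show ?thesis using descent_high_increasing descent_high_decreasing assms by (cases "0 \<le> \<gamma>") auto
qed

end

context greedy_interval
begin

lemma greedy_value_bellman:
  assumes x: "0 \<le> x" "x \<le> 1"
  shows "(if c \<le> x then 1 - \<delta> else 0) + \<delta> * V (shift x) \<le> V x"
proof (cases "c \<le> x")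
  case True
  then show ?thesis using greedy_value_fixpoint[OF x] by (simp add: greedy_op_def)
next
  case False
  then have "0 < c" using x by simp
  then interpret greedy_interval_pos \<beta> \<gamma> c \<delta> by unfold_locales
  show ?thesis using greedy_value_descent[of x] False x by simp
qed

end

section \<open>Two-point splittings\<close>

lemma sets_two_point [simp]: "sets (two_point a u v) = sets borel"
  by (simp add: two_point_def)

lemma space_two_point [simp]: "space (two_point a u v) = UNIV"
  by (simp add: two_point_def)

lemma prob_space_two_point: "prob_space (two_point a u v)"
  unfolding two_point_def by (rule measure_pmf.prob_space_distr) simp

lemma emeasure_two_point:
  assumes a: "0 \<le> a" "a \<le> 1" and A: "A \<in> sets borel"
  shows "emeasure (two_point a u v) A = ennreal a * indicator A u + ennreal (1 - a) * indicator A v"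
proof -
  have "emeasure (two_point a u v) A = emeasure (measure_pmf (bernoulli_pmf a)) ((\<lambda>b. if b then u else v) -` A)"
    unfolding two_point_def using A by (subst emeasure_distr) auto
  also have "\<dots> = (\<integral>\<^sup>+ b. indicator ((\<lambda>b. if b then u else v) -` A) b \<partial>measure_pmf (bernoulli_pmf a))"
    by (subst nn_integral_indicator) auto
  also have "\<dots> = indicator A u * ennreal a + indicator A v * ennreal (1 - a)"
    using a by (subst nn_integral_bernoulli_pmf) (auto simp: indicator_def)
  finally show ?thesis by (simp add: mult.commute)
qed

lemma nn_integral_two_point:
  assumes a: "0 \<le> a" "a \<le> 1"
  shows "(\<integral>\<^sup>+ q. F q \<partial>two_point a u v) = ennreal a * F u + ennreal (1 - a) * F v"
proof -
  text \<open>\<open>F\<close> need not be measurable, so replace it by a simple function agreeing with it on \<open>{u, v}\<close>.\<close>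
  define S where "S q = F u * indicator {u} q + F v * indicator ({v} - {u}) q" for q
  have "emeasure (two_point a u v) {u, v} = ennreal a + ennreal (1 - a)"
    using a by (subst emeasure_two_point) auto
  also have "\<dots> = 1" using a by (simp add: ennreal_plus[symmetric] del: ennreal_plus)
  finally have "measure (two_point a u v) {u, v} = 1" by (simp add: measure_def)
  then have "AE q in two_point a u v. q \<in> {u, v}" by (rule prob_space.AE_prob_1[OF prob_space_two_point])
  then have "AE q in two_point a u v. F q = S q"
    by eventually_elim (cases "u = v"; auto simp: S_def indicator_def)
  then have "(\<integral>\<^sup>+ q. F q \<partial>two_point a u v) = (\<integral>\<^sup>+ q. S q \<partial>two_point a u v)" by (rule nn_integral_cong_AE)
  also have "\<dots> = (\<integral>\<^sup>+ b. S (if b then u else v) \<partial>measure_pmf (bernoulli_pmf a))"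
  proof -
    have "{u} \<in> sets borel" "{v} - {u} \<in> sets borel" by auto
    then have "S \<in> borel_measurable borel" unfolding S_def by measurable
    then show ?thesis unfolding two_point_def by (subst nn_integral_distr) auto
  qed
  also have "\<dots> = S u * ennreal a + S v * ennreal (1 - a)"
    using a by (subst nn_integral_bernoulli_pmf) auto
  also have "\<dots> = ennreal a * F u + ennreal (1 - a) * F v"
    by (cases "u = v") (auto simp: S_def mult.commute)
  finally show ?thesis .
qed

lemma integrable_two_point:
  fixes f :: "real^'w::finite \<Rightarrow> 'b::{banach, second_countable_topology}"
  assumes "f \<in> borel_measurable borel"
  shows "integrable (two_point a u v) f"
proof -
  have "finite (set_pmf (bernoulli_pmf a))" by (rule finite_subset[of _ UNIV]) auto
  then show ?thesis unfolding two_point_def using assms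
    by (subst integrable_distr_eq) (auto intro: integrable_measure_pmf_finite)
qed

lemma integral_two_point:
  fixes f :: "real^'w::finite \<Rightarrow> 'b::{banach, second_countable_topology}"
  assumes a: "0 \<le> a" "a \<le> 1" and f: "f \<in> borel_measurable borel"
  shows "integral\<^sup>L (two_point a u v) f = a *\<^sub>R f u + (1 - a) *\<^sub>R f v"
proof -
  have "integral\<^sup>L (two_point a u v) f = (LINT b|measure_pmf (bernoulli_pmf a). f (if b then u else v))"
    unfolding two_point_def using f by (subst integral_distr) auto
  also have "\<dots> = (\<Sum>b\<in>UNIV. pmf (bernoulli_pmf a) b *\<^sub>R f (if b then u else v))"
    by (rule integral_measure_pmf) auto
  also have "\<dots> = a *\<^sub>R f u + (1 - a) *\<^sub>R f v"
    using a by (simp add: UNIV_bool bernoulli_pmf.rep_eq)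
  finally show ?thesis .
qed

lemma sets_borel_beliefs [measurable]: "(beliefs :: (real^'w::finite) set) \<in> sets borel"
proof (rule borel_closed)
  show "closed (beliefs :: (real^'w) set)"
    unfolding beliefs_def
    by (intro closed_Collect_all closed_Collect_conj closed_Collect_le closed_Collect_eq continuous_intros)
qed

lemma two_point_in_splittings:
  assumes a: "0 \<le> a" "a \<le> 1" and uv: "u \<in> beliefs" "v \<in> beliefs"
  shows "two_point a u v \<in> splittings (a *\<^sub>R u + (1 - a) *\<^sub>R v)"
proof -
  have "emeasure (two_point a u v) beliefs = ennreal a + ennreal (1 - a)"
    using emeasure_two_point[OF a sets_borel_beliefs, of u v] uv by simp
  also have "\<dots> = 1" using a by (simp add: ennreal_plus[symmetric] del: ennreal_plus)
  finally show ?thesis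
    by (simp add: splittings_def prob_space_two_point integrable_two_point integral_two_point[OF a])
qed

lemma return_eq_two_point:
  assumes a: "0 \<le> a" "a \<le> 1"
  shows "return borel p = two_point a p p"
proof (rule measure_eqI)
  fix A assume "A \<in> sets (return borel p)"
  then have A: "A \<in> sets borel" by simp
  have "ennreal a * indicator A p + ennreal (1 - a) * indicator A p = (ennreal a + ennreal (1 - a)) * indicator A p"
    by (simp add: distrib_right)
  also have "\<dots> = indicator A p" using a by (simp add: ennreal_plus[symmetric] del: ennreal_plus)
  finally show "emeasure (return borel p) A = emeasure (two_point a p p) A"
    using A a by (simp add: emeasure_two_point emeasure_return)
qed simp

lemma two_point_weight_0: "two_point 0 u v = two_point 0 u' v"
  by (rule measure_eqI) (auto simp: emeasure_two_point)

text \<open>Jensen's inequality for an affine majorant; \<open>F\<close> need not be measurable.\<close>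

lemma nn_integral_splitting_le_affine:
  assumes \<mu>: "\<mu> \<in> splittings p"
    and F: "\<And>q. q \<in> beliefs \<Longrightarrow> F q \<le> ennreal (a + b * q $ i)"
    and nonneg: "\<And>q. q \<in> beliefs \<Longrightarrow> 0 \<le> a + b * q $ i"
  shows "(\<integral>\<^sup>+ q. F q \<partial>\<mu>) \<le> ennreal (a + b * p $ i)"
proof -
  interpret prob_space \<mu> using \<mu> by (simp add: splittings_def)
  have "measure \<mu> beliefs = 1" using \<mu> by (simp add: splittings_def measure_def)
  then have AE: "AE q in \<mu>. q \<in> beliefs" by (rule AE_prob_1)
  have mean: "integrable \<mu> (\<lambda>q. q)" "integral\<^sup>L \<mu> (\<lambda>q. q) = p" using \<mu> by (auto simp: splittings_def)
  have int: "integrable \<mu> (\<lambda>q. a + b * q $ i)"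
    using integrable_bounded_linear[OF bounded_linear_vec_nth mean(1)] by simp
  have "(\<integral>\<^sup>+ q. F q \<partial>\<mu>) \<le> (\<integral>\<^sup>+ q. ennreal (a + b * q $ i) \<partial>\<mu>)"
    using AE by (intro nn_integral_mono_AE) (auto elim: eventually_mono intro: F)
  also have "\<dots> = ennreal (integral\<^sup>L \<mu> (\<lambda>q. a + b * q $ i))"
    using AE nonneg by (intro nn_integral_eq_integral int) (auto elim: eventually_mono)
  also have "integral\<^sup>L \<mu> (\<lambda>q. a + b * q $ i) = a + b * p $ i"
    using integral_bounded_linear[OF bounded_linear_vec_nth mean(1)] mean(2)
      integrable_bounded_linear[OF bounded_linear_vec_nth mean(1)] prob_space by simp
  finally show ?thesis .
qed

lemma measurable_phi [measurable]: "phi M \<in> borel_measurable borel"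
proof -
  have "phi M = (*v) (transpose M)" by (rule ext) (simp add: phi_def transpose_matrix_vector)
  then show ?thesis by (simp add: borel_measurable_continuous_onI[OF matrix_vector_mult_linear_continuous_on])
qed

lemma belief_Suc_upd: "belief M p1 (Suc n) (h(n := q)) = phi M q"
  by (simp add: belief_def)

lemma hist_space_upd: "h \<in> space (hist_space n) \<Longrightarrow> h(n := q) \<in> space (hist_space (Suc n))"
  by (auto simp: space_PiM lessThan_Suc intro!: PiE_fun_upd)

section \<open>The two-state problem\<close>

text \<open>Ordering the states so that \<open>r$e2 \<le> r$e1\<close> makes the investment beliefs an upper interval
  of the mass on \<open>e1\<close>.\<close>

locale two_state_problem =
  fixes M :: "real^'w::finite^'w" and r :: "real^'w" and \<delta> :: real
    and G :: "real^'w \<Rightarrow> (real^'w) measure" and e1 e2 :: 'w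
  assumes e1_neq_e2: "e1 \<noteq> e2" and UNIV_eq: "(UNIV :: 'w set) = {e1, e2}"
    and r_ordered: "r$e2 \<le> r$e1" and stochastic: "stochastic M"
    and discount: "0 \<le> \<delta>" "\<delta> < 1" and greedy: "greedy_choice r G"
begin

definition \<beta> :: real where "\<beta> = M$e2$e1"

definition \<gamma> :: real where "\<gamma> = M$e1$e1 - M$e2$e1"

text \<open>If \<open>r\<close> is constant and negative there is no investment belief; the junk value \<open>2\<close> keeps
  \<open>invest_iff\<close> valid in that case, which \<open>greedy_choice\<close> then rules out.\<close>

definition threshold :: real where
  "threshold = (if r$e1 = r$e2 then (if 0 \<le> r$e2 then 0 else 2) else - r$e2 / (r$e1 - r$e2))"

definition coord :: "real \<Rightarrow> real^'w" where "coord y = (\<chi> w. if w = e1 then y else 1 - y)"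

lemma sum_UNIV_two: "(\<Sum>w\<in>UNIV. f w) = f e1 + f e2"
proof -
  have "(\<Sum>w\<in>UNIV. f w) = (\<Sum>w\<in>{e1, e2}. f w)" by (simp only: UNIV_eq)
  then show ?thesis using e1_neq_e2 by simp
qed

lemma vec_eq_iff_two: "(x::real^'w) = y \<longleftrightarrow> x$e1 = y$e1 \<and> x$e2 = y$e2"
proof
  assume h: "x$e1 = y$e1 \<and> x$e2 = y$e2"
  show "x = y" unfolding vec_eq_iff
  proof
    fix i :: 'w
    have "i = e1 \<or> i = e2" using UNIV_eq by blast
    then show "x$i = y$i" using h by auto
  qed
qed simp

lemma beliefs_iff: "p \<in> beliefs \<longleftrightarrow> 0 \<le> p$e1 \<and> 0 \<le> p$e2 \<and> p$e1 + p$e2 = 1"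
proof -
  have "(\<forall>w. 0 \<le> p$w) \<longleftrightarrow> 0 \<le> p$e1 \<and> 0 \<le> p$e2"
    using UNIV_eq by (metis UNIV_I insertE singletonD)
  then show ?thesis unfolding beliefs_def using sum_UNIV_two[of "\<lambda>w. p$w"] by auto
qed

lemma coord_e1 [simp]: "coord y $ e1 = y"
  by (simp add: coord_def)

lemma beliefs_eq_coord: "p \<in> beliefs \<Longrightarrow> p = coord (p$e1)"
  unfolding vec_eq_iff_two by (auto simp: coord_def beliefs_iff e1_neq_e2 e1_neq_e2[symmetric])

lemma coord_in_beliefs: "0 \<le> y \<Longrightarrow> y \<le> 1 \<Longrightarrow> coord y \<in> beliefs"
  by (auto simp: beliefs_iff coord_def e1_neq_e2 e1_neq_e2[symmetric])

lemma beliefs_e1_bounds: "p \<in> beliefs \<Longrightarrow> 0 \<le> p$e1 \<and> p$e1 \<le> 1"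
  by (auto simp: beliefs_iff)

lemma coord_convex: "0 < c \<Longrightarrow> coord x = (x / c) *\<^sub>R coord c + (1 - x / c) *\<^sub>R coord 0"
  unfolding vec_eq_iff_two using e1_neq_e2 by (auto simp: coord_def field_simps)

lemma invest_iff:
  assumes "p \<in> beliefs"
  shows "p \<in> invest r \<longleftrightarrow> threshold \<le> p$e1"
proof -
  have p2: "p$e2 = 1 - p$e1" using assms by (simp add: beliefs_iff)
  have "p \<bullet> r = r$e2 + p$e1 * (r$e1 - r$e2)"
    unfolding inner_vec_def sum_UNIV_two p2 by (simp add: algebra_simps)
  moreover have "0 \<le> r$e2 + p$e1 * (r$e1 - r$e2) \<longleftrightarrow> - r$e2 / (r$e1 - r$e2) \<le> p$e1"
    if "r$e1 \<noteq> r$e2"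
  proof -
    have pos: "0 < r$e1 - r$e2" using that r_ordered by simp
    have "- r$e2 / (r$e1 - r$e2) \<le> p$e1 \<longleftrightarrow> - p$e1 \<le> r$e2 / (r$e1 - r$e2)" by linarith
    also have "\<dots> \<longleftrightarrow> - p$e1 * (r$e1 - r$e2) \<le> r$e2" using pos by (simp add: le_divide_eq)
    finally show ?thesis by (simp add: algebra_simps)
  qed
  ultimately show ?thesis
    using assms beliefs_e1_bounds[OF assms] by (auto simp: invest_def threshold_def)
qed

lemma phi_in_beliefs:
  assumes q: "q \<in> beliefs"
  shows "phi M q \<in> beliefs" and "phi M q $ e1 = \<beta> + \<gamma> * q$e1"
proof -
  have M: "\<And>i j. 0 \<le> M$i$j" "\<And>i. M$i$e1 + M$i$e2 = 1"
    using stochastic unfolding stochastic_def sum_UNIV_two by auto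
  have q2: "q$e2 = 1 - q$e1" "0 \<le> q$e1" "0 \<le> q$e2" using q by (auto simp: beliefs_iff)
  have c1: "phi M q $ e1 = q$e1 * M$e1$e1 + q$e2 * M$e2$e1"
    and c2: "phi M q $ e2 = q$e1 * M$e1$e2 + q$e2 * M$e2$e2"
    unfolding phi_def vector_matrix_mult_def sum_UNIV_two by simp_all
  have "phi M q $ e1 + phi M q $ e2 = q$e1 * (M$e1$e1 + M$e1$e2) + q$e2 * (M$e2$e1 + M$e2$e2)"
    unfolding c1 c2 by (simp add: algebra_simps)
  then show "phi M q \<in> beliefs" unfolding beliefs_iff c1 c2 using M q2 by simp
  show "phi M q $ e1 = \<beta> + \<gamma> * q$e1" unfolding c1 q2(1) by (simp add: \<beta>_def \<gamma>_def algebra_simps)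
qed

lemma threshold_le_1: "threshold \<le> 1"
proof (rule ccontr)
  assume "\<not> threshold \<le> 1"
  then have "invest r = {}" using invest_iff by (force simp: invest_def beliefs_iff)
  moreover have "coord 0 \<in> noinvest r" using coord_in_beliefs[of 0] \<open>invest r = {}\<close> by (simp add: noinvest_def)
  then have "G (coord 0) \<in> greedy_splittings r (coord 0)" using greedy by (simp add: greedy_choice_def)
  ultimately show False by (auto simp: greedy_splittings_def feasible_split_def)
qed

sublocale greedy_interval \<beta> \<gamma> threshold \<delta>
proof
  have M: "\<And>i j. 0 \<le> M$i$j" "\<And>i. M$i$e1 + M$i$e2 = 1"
    using stochastic unfolding stochastic_def sum_UNIV_two by auto
  show "0 \<le> \<beta>" "\<beta> \<le> 1" "0 \<le> \<beta> + \<gamma>" "\<beta> + \<gamma> \<le> 1"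
    unfolding \<beta>_def \<gamma>_def using M(1)[of e1 e1] M(1)[of e2 e1] M(1)[of e1 e2] M(1)[of e2 e2] M(2)[of e1] M(2)[of e2]
    by linarith+
qed (use threshold_le_1 discount in auto)

lemma feasible_split_coord:
  assumes p: "p \<in> beliefs" and x: "p$e1 < threshold"
  shows "feasible_split r p (p$e1 / threshold) (coord threshold) (coord 0)"
proof -
  have pos: "0 < threshold" using x beliefs_e1_bounds[OF p] by simp
  have "coord threshold \<in> invest r"
    using invest_iff coord_in_beliefs[of threshold] pos threshold_le_1 by (simp add: invest_def)
  then show ?thesis
    unfolding feasible_split_def
    using p x pos coord_in_beliefs[of 0] coord_convex[OF pos, of "p$e1"] beliefs_eq_coord[OF p]
      beliefs_e1_bounds[OF p] by auto
qed

lemma feasible_split_e1: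
  assumes "feasible_split r p a qI qJ"
  shows "threshold \<le> qI$e1" "0 \<le> qJ$e1" "p$e1 = a * qI$e1 + (1 - a) * qJ$e1"
  using assms invest_iff beliefs_e1_bounds by (auto simp: feasible_split_def invest_def)

text \<open>The greedy splitting is unique: the weight bound \<open>a * threshold \<le> p$e1\<close> is attained only
  by \<open>coord threshold\<close> and \<open>coord 0\<close> (or, when \<open>p$e1 = 0\<close>, by the weight \<open>0\<close>).\<close>

lemma greedy_choice_eq:
  assumes p: "p \<in> beliefs"
  shows "G p = (if threshold \<le> p$e1 then two_point 1 p p
                else two_point (p$e1 / threshold) (coord threshold) (coord 0))"
proof (cases "threshold \<le> p$e1")
  case True
  then have "G p = return borel p" using greedy invest_iff[OF p] by (simp add: greedy_choice_def)
  then show ?thesis using True return_eq_two_point[of 1 p] by simp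
next
  case False
  define x where "x = p$e1"
  have pos: "0 < threshold" using False beliefs_e1_bounds[OF p] by simp
  have "p \<in> noinvest r" using invest_iff[OF p] False p by (simp add: noinvest_def)
  then obtain a qI qJ where Gp: "G p = two_point a qI qJ" and fs: "feasible_split r p a qI qJ"
    and max: "\<And>a' qI' qJ'. feasible_split r p a' qI' qJ' \<Longrightarrow> a' \<le> a"
    using greedy unfolding greedy_choice_def greedy_splittings_def by blast
  have a: "0 \<le> a" "a \<le> 1" and qI: "qI \<in> beliefs" and qJ: "qJ \<in> beliefs"
    using fs by (auto simp: feasible_split_def invest_def)
  have split: "x - a * threshold = a * (qI$e1 - threshold) + (1 - a) * qJ$e1"
    using feasible_split_e1(3)[OF fs] by (simp add: x_def algebra_simps)
  have nonneg: "0 \<le> a * (qI$e1 - threshold)" "0 \<le> (1 - a) * qJ$e1"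
    using a feasible_split_e1(1,2)[OF fs] by simp_all
  have "x / threshold \<le> a" using max[OF feasible_split_coord[OF p]] False by (simp add: x_def)
  moreover have "a \<le> x / threshold" using split nonneg pos by (simp add: le_divide_eq)
  ultimately have ax: "a = x / threshold" by simp
  then have "x - a * threshold = 0" using pos by simp
  then have z1: "a * (qI$e1 - threshold) = 0" and z2: "(1 - a) * qJ$e1 = 0"
    using split nonneg by linarith+
  have "a < 1" using ax False pos by (simp add: x_def)
  then have "qJ = coord 0" using z2 beliefs_eq_coord[OF qJ] by simp
  moreover have "two_point a qI (coord 0) = two_point a (coord threshold) (coord 0)"
  proof (cases "a = 0")
    case True
    then show ?thesis by (simp add: two_point_weight_0)
  next
    case False
    then show ?thesis using z1 beliefs_eq_coord[OF qI] by simp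
  qed
  ultimately show ?thesis using Gp ax False by (simp add: x_def)
qed

lemma greedy_choice_splitting: "p \<in> beliefs \<Longrightarrow> G p \<in> splittings p"
  using two_point_in_splittings[of 1 p p] two_point_in_splittings[of "p$e1 / threshold" "coord threshold" "coord 0"]
    coord_in_beliefs[of threshold] coord_in_beliefs[of 0] threshold_le_1 beliefs_e1_bounds[of p]
    coord_convex[of threshold "p$e1"] beliefs_eq_coord[of p]
  by (auto simp: greedy_choice_eq)

definition greedy_kernel :: "real^'w \<Rightarrow> (real^'w) measure" where
  "greedy_kernel p = (if p \<in> beliefs then G p else return borel p)"

lemma greedy_strategy_eq_kernel: "greedy_strategy M G p1 n h = greedy_kernel (belief M p1 n h)"
  by (simp add: greedy_strategy_def greedy_kernel_def Let_def)

lemma measurable_greedy_kernel: "greedy_kernel \<in> borel \<rightarrow>\<^sub>M subprob_algebra borel"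
proof (rule measurable_subprob_algebra)
  fix p :: "real^'w"
  show "subprob_space (greedy_kernel p)" "sets (greedy_kernel p) = sets borel"
    using greedy_choice_splitting[of p]
    by (auto simp: greedy_kernel_def splittings_def prob_space_imp_subprob_space subprob_space_return)
next
  fix A :: "(real^'w) set" assume A: "A \<in> sets borel"
  define E where "E p = (if p \<in> beliefs \<and> \<not> threshold \<le> p$e1
      then ennreal (p$e1 / threshold) * indicator A (coord threshold) + ennreal (1 - p$e1 / threshold) * indicator A (coord 0)
      else indicator A p)" for p
  have "emeasure (greedy_kernel p) A = E p" for p
  proof (cases "p \<in> beliefs \<and> \<not> threshold \<le> p$e1")
    case True
    then have "0 \<le> p$e1 / threshold" "p$e1 / threshold \<le> 1" using beliefs_e1_bounds[of p] by auto
    then show ?thesis using True A by (simp add: greedy_kernel_def E_def greedy_choice_eq emeasure_two_point)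
  next
    case False
    then show ?thesis
      using A by (auto simp: greedy_kernel_def E_def greedy_choice_eq emeasure_two_point emeasure_return)
  qed
  moreover have "E \<in> borel_measurable borel" unfolding E_def using A by measurable
  ultimately show "(\<lambda>p. emeasure (greedy_kernel p) A) \<in> borel_measurable borel" by simp
qed

lemma belief_in_beliefs: "p1 \<in> beliefs \<Longrightarrow> (\<And>i. i < n \<Longrightarrow> h i \<in> beliefs) \<Longrightarrow> belief M p1 n h \<in> beliefs"
  by (cases n) (auto simp: belief_def phi_in_beliefs)

lemma greedy_is_strategy:
  assumes p1: "p1 \<in> beliefs"
  shows "is_strategy M p1 (greedy_strategy M G p1)"
  unfolding is_strategy_def
proof (intro conjI allI impI)
  fix n
  show "greedy_strategy M G p1 n \<in> hist_space n \<rightarrow>\<^sub>M subprob_algebra borel"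
  proof (cases n)
    case 0
    have "greedy_kernel p1 \<in> space (subprob_algebra borel)"
      using measurable_greedy_kernel by (rule measurable_space) simp
    moreover have "greedy_strategy M G p1 n = (\<lambda>h. greedy_kernel p1)"
      using 0 by (auto simp: greedy_strategy_eq_kernel belief_def)
    ultimately show ?thesis by simp
  next
    case (Suc m)
    have "(\<lambda>h. h m) \<in> hist_space (Suc m) \<rightarrow>\<^sub>M borel"
      using measurable_component_singleton[of m "{..<Suc m}" "\<lambda>_. borel"] by simp
    then have "(\<lambda>h. greedy_kernel (phi M (h m))) \<in> hist_space (Suc m) \<rightarrow>\<^sub>M subprob_algebra borel"
      using measurable_greedy_kernel by measurable
    moreover have "greedy_strategy M G p1 n = (\<lambda>h. greedy_kernel (phi M (h m)))"
      using Suc by (auto simp: greedy_strategy_eq_kernel belief_def)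
    ultimately show ?thesis using Suc by simp
  qed
next
  fix n and h :: "nat \<Rightarrow> real^'w" assume "h \<in> space (hist_space n) \<and> (\<forall>i<n. h i \<in> beliefs)"
  then have "belief M p1 n h \<in> beliefs" using belief_in_beliefs[OF p1] by blast
  then show "greedy_strategy M G p1 n h \<in> splittings (belief M p1 n h)"
    using greedy_choice_splitting by (simp add: greedy_strategy_eq_kernel greedy_kernel_def)
qed

lemma stage_payoff:
  assumes q: "q \<in> beliefs" and y: "0 \<le> y"
  shows "ennreal ((1 - \<delta>) * \<delta> ^ n) * indicator (invest r) q + ennreal (\<delta> ^ Suc n * y)
       = ennreal (\<delta> ^ n * ((if threshold \<le> q$e1 then 1 - \<delta> else 0) + \<delta> * y))"
proof -
  have "ennreal ((1 - \<delta>) * \<delta> ^ n) * indicator (invest r) q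
      = ennreal (\<delta> ^ n * (if threshold \<le> q$e1 then 1 - \<delta> else 0))"
    using invest_iff[OF q] by (auto simp: mult.commute)
  then show ?thesis
    using discount y by (simp add: ennreal_plus[symmetric] algebra_simps del: ennreal_plus)
qed

lemma nn_integral_splitting_le_value:
  assumes p: "p \<in> beliefs" and \<mu>: "\<mu> \<in> splittings p" and s: "0 \<le> s"
    and F: "\<And>q. q \<in> beliefs \<Longrightarrow> F q \<le> ennreal (s * V (q$e1))"
  shows "(\<integral>\<^sup>+ q. F q \<partial>\<mu>) \<le> ennreal (s * V (p$e1))"
proof (rule ennreal_le_epsilon)
  fix e :: real assume "0 < e"
  then obtain k where k: "s * \<delta> ^ k < e" using exists_mult_power_less discount by blast
  define x where "x = p$e1"
  have x: "0 \<le> x" "x \<le> 1" using beliefs_e1_bounds[OF p] by (auto simp: x_def)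
  obtain m where m: "\<And>y. 0 \<le> y \<Longrightarrow> y \<le> 1 \<Longrightarrow> V y \<le> V x + m * (y - x) + \<delta> ^ k"
    using greedy_value_approx_support[OF x] by blast
  have "(\<integral>\<^sup>+ q. F q \<partial>\<mu>) \<le> ennreal (s * (V x - m * x + \<delta> ^ k) + (s * m) * p$e1)"
  proof (rule nn_integral_splitting_le_affine[OF \<mu>])
    fix q :: "real^'w" assume q: "q \<in> beliefs"
    have "V (q$e1) \<le> V x + m * (q$e1 - x) + \<delta> ^ k" using m beliefs_e1_bounds[OF q] by blast
    then have "s * V (q$e1) \<le> s * (V x + m * (q$e1 - x) + \<delta> ^ k)" using s by (rule mult_left_mono)
    then have le: "s * V (q$e1) \<le> s * (V x - m * x + \<delta> ^ k) + (s * m) * q$e1"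
      by (simp add: algebra_simps)
    then show "F q \<le> ennreal (s * (V x - m * x + \<delta> ^ k) + (s * m) * q$e1)"
      using F[OF q] ennreal_leI order_trans by blast
    show "0 \<le> s * (V x - m * x + \<delta> ^ k) + (s * m) * q$e1"
      using le greedy_value_bounds beliefs_e1_bounds[OF q] s by (meson mult_nonneg_nonneg order_trans)
  qed
  also have "\<dots> = ennreal (s * V x) + ennreal (s * \<delta> ^ k)"
    using greedy_value_bounds[OF x] s discount by (simp add: x_def algebra_simps flip: ennreal_plus)
  also have "\<dots> \<le> ennreal (s * V (p$e1)) + ennreal e"
    using k unfolding x_def by (intro add_left_mono ennreal_leI) simp
  finally show "(\<integral>\<^sup>+ q. F q \<partial>\<mu>) \<le> ennreal (s * V (p$e1)) + ennreal e" .
qed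

lemma Wfin_le_greedy_value:
  assumes p1: "p1 \<in> beliefs" and \<sigma>: "is_strategy M p1 \<sigma>"
  shows "h \<in> space (hist_space n) \<Longrightarrow> \<forall>i<n. h i \<in> beliefs \<Longrightarrow>
    Wfin r \<delta> \<sigma> N n h \<le> ennreal (\<delta> ^ n * V ((belief M p1 n h)$e1))"
proof (induction N arbitrary: n h)
  case 0
  then show ?case by simp
next
  case (Suc N)
  define p where "p = belief M p1 n h"
  have p: "p \<in> beliefs" using belief_in_beliefs[OF p1] Suc.prems by (auto simp: p_def)
  have \<mu>: "\<sigma> n h \<in> splittings p" using \<sigma> Suc.prems by (auto simp: is_strategy_def p_def)
  have "Wfin r \<delta> \<sigma> (Suc N) n h \<le> ennreal (\<delta> ^ n * V (p$e1))"
    unfolding Wfin.simps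
  proof (rule nn_integral_splitting_le_value[OF p \<mu>])
    show "0 \<le> \<delta> ^ n" using discount by simp
    fix q :: "real^'w" assume q: "q \<in> beliefs"
    have x: "0 \<le> q$e1" "q$e1 \<le> 1" using beliefs_e1_bounds[OF q] by auto
    have hs: "h(n := q) \<in> space (hist_space (Suc n))" using hist_space_upd Suc.prems by blast
    have pre: "\<forall>i<Suc n. (h(n := q)) i \<in> beliefs" using Suc.prems q by (auto simp: less_Suc_eq)
    have "Wfin r \<delta> \<sigma> N (Suc n) (h(n := q)) \<le> ennreal (\<delta> ^ Suc n * V (shift (q$e1)))"
      using Suc.IH[OF hs pre] unfolding belief_Suc_upd phi_in_beliefs(2)[OF q] .
    then have "ennreal ((1 - \<delta>) * \<delta> ^ n) * indicator (invest r) q + Wfin r \<delta> \<sigma> N (Suc n) (h(n := q))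
        \<le> ennreal ((1 - \<delta>) * \<delta> ^ n) * indicator (invest r) q + ennreal (\<delta> ^ Suc n * V (shift (q$e1)))"
      by (rule add_left_mono)
    also have "\<dots> = ennreal (\<delta> ^ n * ((if threshold \<le> q$e1 then 1 - \<delta> else 0) + \<delta> * V (shift (q$e1))))"
      using stage_payoff[OF q] greedy_value_bounds shift_unit x by simp
    also have "\<dots> \<le> ennreal (\<delta> ^ n * V (q$e1))"
      using greedy_value_bellman[OF x] discount by (intro ennreal_leI mult_left_mono) auto
    finally show "ennreal ((1 - \<delta>) * \<delta> ^ n) * indicator (invest r) q + Wfin r \<delta> \<sigma> N (Suc n) (h(n := q))
        \<le> ennreal (\<delta> ^ n * V (q$e1))" .
  qed
  then show ?case by (simp add: p_def)
qed

lemma nn_integral_greedy_choice: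
  assumes p: "p \<in> beliefs" and x: "p$e1 < threshold"
  shows "(\<integral>\<^sup>+ q. F q \<partial>G p)
    = ennreal (p$e1 / threshold) * F (coord threshold) + ennreal (1 - p$e1 / threshold) * F (coord 0)"
  using beliefs_e1_bounds[OF p] x by (simp add: greedy_choice_eq[OF p] nn_integral_two_point)

lemma Wfin_greedy_strategy:
  assumes p1: "p1 \<in> beliefs"
  shows "\<forall>i<n. h i \<in> beliefs \<Longrightarrow>
    Wfin r \<delta> (greedy_strategy M G p1) N n h = ennreal (\<delta> ^ n * W N ((belief M p1 n h)$e1))"
proof (induction N arbitrary: n h)
  case 0
  then show ?case by simp
next
  case (Suc N)
  define p where "p = belief M p1 n h"
  have p: "p \<in> beliefs" using belief_in_beliefs[OF p1] Suc.prems by (auto simp: p_def)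
  define F where "F q = ennreal ((1 - \<delta>) * \<delta> ^ n) * indicator (invest r) q
      + Wfin r \<delta> (greedy_strategy M G p1) N (Suc n) (h(n := q))" for q
  have F: "F q = ennreal (\<delta> ^ n * ((if threshold \<le> q$e1 then 1 - \<delta> else 0) + \<delta> * W N (shift (q$e1))))"
    if q: "q \<in> beliefs" for q
  proof -
    have pre: "\<forall>i<Suc n. (h(n := q)) i \<in> beliefs" using Suc.prems q by (auto simp: less_Suc_eq)
    have "Wfin r \<delta> (greedy_strategy M G p1) N (Suc n) (h(n := q)) = ennreal (\<delta> ^ Suc n * W N (shift (q$e1)))"
      using Suc.IH[OF pre] unfolding belief_Suc_upd phi_in_beliefs(2)[OF q] .
    moreover have "0 \<le> W N (shift (q$e1))" using greedy_iter_bounds shift_unit beliefs_e1_bounds[OF q] by blast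
    ultimately show ?thesis unfolding F_def using stage_payoff[OF q] by simp
  qed
  have "Wfin r \<delta> (greedy_strategy M G p1) (Suc N) n h = (\<integral>\<^sup>+ q. F q \<partial>G p)"
    using p by (simp add: F_def greedy_strategy_eq_kernel greedy_kernel_def p_def)
  also have "\<dots> = ennreal (\<delta> ^ n * T (W N) (p$e1))"
  proof (cases "threshold \<le> p$e1")
    case True
    then show ?thesis using p F[OF p] by (simp add: greedy_choice_eq greedy_op_def nn_integral_two_point)
  next
    case False
    define t where "t = p$e1 / threshold"
    have pos: "0 < threshold" using False beliefs_e1_bounds[OF p] by simp
    have t: "0 \<le> t" "t \<le> 1" using False beliefs_e1_bounds[OF p] by (auto simp: t_def)
    have c: "0 \<le> shift threshold" "shift threshold \<le> 1" using shift_unit[of threshold] pos threshold_le_1 by auto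
    have "(\<integral>\<^sup>+ q. F q \<partial>G p) = ennreal t * F (coord threshold) + ennreal (1 - t) * F (coord 0)"
      using nn_integral_greedy_choice[OF p] False by (simp add: t_def)
    also have "\<dots> = ennreal (t * (\<delta> ^ n * ((1 - \<delta>) + \<delta> * W N (shift threshold)))
        + (1 - t) * (\<delta> ^ n * (\<delta> * W N \<beta>)))"
      using F coord_in_beliefs[of threshold] coord_in_beliefs[of 0] pos threshold_le_1 t discount
        greedy_iter_bounds[OF c] greedy_iter_bounds[OF \<beta>_nonneg \<beta>_le_1]
      by (simp add: ennreal_convex_combination)
    also have "\<dots> = ennreal (\<delta> ^ n * T (W N) (p$e1))"
      using False pos by (simp add: greedy_op_def t_def algebra_simps)
    finally show ?thesis .
  qed
  finally show ?case by (simp add: p_def)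
qed

lemma greedy_optimal:
  assumes p1: "p1 \<in> beliefs"
  shows "is_strategy M p1 (greedy_strategy M G p1)
    \<and> payoff r \<delta> (greedy_strategy M G p1) = value_fn M r \<delta> p1"
proof -
  have x: "0 \<le> p1$e1" "p1$e1 \<le> 1" using beliefs_e1_bounds[OF p1] by auto
  have greedy_payoff: "payoff r \<delta> (greedy_strategy M G p1) = ennreal (V (p1$e1))"
    unfolding payoff_def using Wfin_greedy_strategy[OF p1, of 0] SUP_greedy_iter[OF x]
    by (simp add: belief_def)
  have "payoff r \<delta> \<sigma> \<le> ennreal (V (p1$e1))" if "is_strategy M p1 \<sigma>" for \<sigma>
    unfolding payoff_def
  proof (rule SUP_least)
    fix N
    have "(\<lambda>_. undefined) \<in> space (hist_space 0 :: (nat \<Rightarrow> real^'w) measure)"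
      by (simp add: space_PiM_empty)
    then show "Wfin r \<delta> \<sigma> N 0 (\<lambda>_. undefined) \<le> ennreal (V (p1$e1))"
      using Wfin_le_greedy_value[OF p1 that, of "\<lambda>_. undefined" 0 N] by (simp add: belief_def)
  qed
  then have "value_fn M r \<delta> p1 \<le> payoff r \<delta> (greedy_strategy M G p1)"
    unfolding value_fn_def greedy_payoff by (intro SUP_least) simp
  moreover have "payoff r \<delta> (greedy_strategy M G p1) \<le> value_fn M r \<delta> p1"
    unfolding value_fn_def using greedy_is_strategy[OF p1] by (intro SUP_upper) simp
  ultimately show ?thesis using greedy_is_strategy[OF p1] by simp
qed

end

theorem theorem1:
  fixes M :: "real^'w::finite^'w" and r :: "real^'w" and \<delta> :: real
    and G :: "real^'w \<Rightarrow> (real^'w) measure"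
  assumes "CARD('w) = 2"
    and "stochastic M" and "irreducible M"
    and "0 \<le> \<delta>" and "\<delta> < 1"
    and "greedy_choice r G"
  shows "\<forall>p1 \<in> beliefs. is_strategy M p1 (greedy_strategy M G p1)
           \<and> payoff r \<delta> (greedy_strategy M G p1) = value_fn M r \<delta> p1"
proof -
  obtain a b :: 'w where ab: "(UNIV :: 'w set) = {a, b}" "a \<noteq> b"
    using assms(1) card_2_iff[of "UNIV :: 'w set"] by auto
  obtain e1 e2 :: 'w where "e1 \<noteq> e2" "(UNIV :: 'w set) = {e1, e2}" "r$e2 \<le> r$e1"
  proof (cases "r$b \<le> r$a")
    case True
    then show ?thesis using that ab by blast
  next
    case False
    then show ?thesis using that[of b a] ab by (auto simp: insert_commute)
  qed
  then interpret two_state_problem M r \<delta> G e1 e2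
    using assms by unfold_locales auto
  show ?thesis using greedy_optimal by blast
qed

end
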